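(* Let $\mathbf{A}$ be a real $n\times n$ matrix that is strictly totally $J$-sign-symmetric (STJS). Then all eigenvalues of $\mathbf{A}$ are positive and simple: $$\rho(\mathbf{A})=\lambda_1>\lambda_2>\cdots>\lambda_n>0.$$
   Context: For $J\subseteq[m]=\{1,\ldots,m\}$ with $J^c=[m]\setminus J$, an $m\times m$ matrix $(a_{ik})$ is strictly $J$-sign-symmetric if $a_{ik}>0$ for $(i,k)\in(J\times J)\cup(J^c\times J^c)$ and $a_{ik}<0$ for $(i,k)\in(J\times J^c)\cup(J^c\times J)$; it is strictly sign-symmetric in this sense if it is strictly $J$-sign-symmetric for some $J$. The $j$th compound matrix $\mathbf{A}^{(j)}$ is the $\binom{n}{j}\times\binom{n}{j}$ matrix of all $j\times j$ minors of $\mathbf{A}$ with row and column index sets listed in lexicographic order. $\mathbf{A}$ is STJS if $\mathbf{A}$ is strictly $J$-sign-symmetric for some $J\subseteq[n]$ and, for every $j=2,\ldots,n$, $\mathbf{A}^{(j)}$ is strictly $J_j$-sign-symmetric for some subset $J_j$ of its index set. *)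

theory Defs
  imports "Jordan_Normal_Form.Spectral_Radius" "Jordan_Normal_Form.DL_Submatrix"
begin

definition strictly_sign_symmetric_on :: "'i set \<Rightarrow> ('i \<Rightarrow> 'i \<Rightarrow> real) \<Rightarrow> bool" where
  "strictly_sign_symmetric_on S a \<longleftrightarrow>
     (\<exists>J \<subseteq> S. \<forall>i\<in>S. \<forall>k\<in>S.
        ((i \<in> J) = (k \<in> J) \<longrightarrow> a i k > 0) \<and> ((i \<in> J) \<noteq> (k \<in> J) \<longrightarrow> a i k < 0))"

text \<open>The j-th compound matrix, indexed by j-subsets of the index set {0..<n}
  (rows/columns of a minor taken in increasing order). Its sign-symmetry does not
  depend on how the j-subsets are enumerated, so the lexicographic listing is
  represented by indexing with the subsets themselves.\<close>
definition compound_entry :: "real mat \<Rightarrow> nat set \<Rightarrow> nat set \<Rightarrow> real" where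
  "compound_entry A I K = det (submatrix A I K)"

definition STJS :: "nat \<Rightarrow> real mat \<Rightarrow> bool" where
  "STJS n A \<longleftrightarrow> A \<in> carrier_mat n n \<and>
     strictly_sign_symmetric_on {..<n} (\<lambda>i k. A $$ (i, k)) \<and>
     (\<forall>j\<in>{2..n}. strictly_sign_symmetric_on {I. I \<subseteq> {..<n} \<and> card I = j}
                                              (compound_entry A))"

end

theory Submission
  imports Defs
begin

text \<open>By Perron's theorem a matrix with positive entries has a simple positive eigenvalue that
  strictly dominates all other eigenvalues in modulus; conjugating by the signature matrix of \<open>J\<close>
  carries this over to strictly sign-symmetric matrices. The eigenvalues of the \<open>j\<close>-th compound
  matrix are the products of \<open>j\<close> eigenvalues of \<open>A\<close> taken over \<open>j\<close>-subsets: by Cauchy--Binet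
  the compound is multiplicative, so it may be computed on a triangular Schur form, whose compound
  is triangular once the subsets are ordered by their sums. Listing the eigenvalues with
  \<open>|\<lambda>\<^sub>0| \<ge> |\<lambda>\<^sub>1| \<ge> \<dots>\<close>, the dominant product for every \<open>j\<close> must be
  \<open>\<lambda>\<^sub>0 \<cdots> \<lambda>\<^sub>j\<^sub>-\<^sub>1\<close>, which is therefore positive and strictly larger than all the others;
  hence every \<open>\<lambda>\<^sub>j\<close> is a quotient of two positive reals and no two moduli coincide.\<close>

section \<open>Subsets and submatrices\<close>

lemma le_pick: "r < card L \<Longrightarrow> r \<le> pick L r"
proof (induction r)
  case (Suc r)
  then have "pick L r < pick L (Suc r)" by (intro pick_mono) auto
  with Suc show ?case by simp
qed simp

lemma pick_less_bound: "L \<subseteq> {..<n} \<Longrightarrow> r < card L \<Longrightarrow> pick L r < n"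
  using pick_in_set by blast

lemma pick_le_pick: "a \<le> b \<Longrightarrow> b < card L \<Longrightarrow> pick L a \<le> pick L b"
  using pick_mono[of b L a] by (cases "a = b") auto

lemma bij_betw_pick:
  assumes "finite L" shows "bij_betw (pick L) {..<card L} L"
proof (rule bij_betw_imageI)
  show "inj_on (pick L) {..<card L}"
  proof (rule inj_onI, rule ccontr)
    fix a b assume "a \<in> {..<card L}" "b \<in> {..<card L}" "pick L a = pick L b" "a \<noteq> b"
    then show False using pick_mono[of a L b] pick_mono[of b L a] by (cases "a < b") auto
  qed
  show "pick L ` {..<card L} = L"
  proof
    show "pick L ` {..<card L} \<subseteq> L" using pick_in_set by auto
    show "L \<subseteq> pick L ` {..<card L}"
    proof
      fix x assume x: "x \<in> L"
      have "{a\<in>L. a < x} \<subset> L" using x by auto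
      then have "card {a\<in>L. a < x} < card L" using assms psubset_card_mono by blast
      with pick_card_in_set[OF x] show "x \<in> pick L ` {..<card L}"
        by (intro image_eqI[of _ _ "card {a\<in>L. a < x}"]) auto
    qed
  qed
qed

lemma sum_pick: "finite L \<Longrightarrow> (\<Sum>r<card L. pick L r) = \<Sum>L"
  using sum.reindex_bij_betw[OF bij_betw_pick, of L id] by simp

abbreviation subsets_of_card :: "nat \<Rightarrow> nat \<Rightarrow> nat set set" where
  "subsets_of_card n j \<equiv> {L. L \<subseteq> {..<n} \<and> card L = j}"

lemma finite_subsets_of_card: "finite (subsets_of_card n j)"
  by (rule finite_subset[of _ "Pow {..<n}"]) auto

lemma finite_of_subsets_of_card: "L \<in> subsets_of_card n j \<Longrightarrow> finite L"
  using finite_subset by blast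

text \<open>Any enumeration of the \<open>j\<close>-subsets will do: neither the sign pattern nor the spectrum of
  a compound matrix depends on it.\<close>

definition subsets_list :: "nat \<Rightarrow> nat \<Rightarrow> nat set list" where
  "subsets_list n j = (SOME xs. set xs = subsets_of_card n j \<and> distinct xs)"

lemma set_subsets_list: "set (subsets_list n j) = subsets_of_card n j"
  and distinct_subsets_list: "distinct (subsets_list n j)"
  using someI_ex[OF finite_distinct_list[OF finite_subsets_of_card[of n j]]]
  unfolding subsets_list_def by simp_all

lemma bij_betw_nth_subsets_list:
  "bij_betw ((!) (subsets_list n j)) {..<length (subsets_list n j)} (subsets_of_card n j)"
  by (rule bij_betw_nth[OF distinct_subsets_list]) (auto simp: set_subsets_list)

lemma nth_subsets_list:
  "p < length (subsets_list n j) \<Longrightarrow> subsets_list n j ! p \<in> subsets_of_card n j"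
  using bij_betw_apply[OF bij_betw_nth_subsets_list] by blast

lemma Collect_less_and_mem: "{i. i < d \<and> i \<in> S} = S \<inter> {..<d}"
  by auto

lemma submatrix_carrier:
  "submatrix A I K \<in> carrier_mat (card (I \<inter> {..<dim_row A})) (card (K \<inter> {..<dim_col A}))"
  by (simp only: carrier_mat_def mem_Collect_eq dim_submatrix Collect_less_and_mem)

lemma submatrix_index_Int:
  "r < card (I \<inter> {..<dim_row A}) \<Longrightarrow> c < card (K \<inter> {..<dim_col A}) \<Longrightarrow>
   submatrix A I K $$ (r, c) = A $$ (pick I r, pick K c)"
  by (rule submatrix_index) (simp_all only: Collect_less_and_mem)

lemma submatrix_subsets_carrier:
  assumes "A \<in> carrier_mat m n" "I \<in> subsets_of_card m j" "K \<in> subsets_of_card n k"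
  shows "submatrix A I K \<in> carrier_mat j k"
proof -
  have "card (I \<inter> {..<m}) = j" "card (K \<inter> {..<n}) = k" using assms(2,3) by (simp_all add: Int_absorb2)
  then show ?thesis using submatrix_carrier[of A I K] assms(1) by simp
qed

lemma submatrix_subsets_index:
  assumes "A \<in> carrier_mat m n" "I \<in> subsets_of_card m j" "K \<in> subsets_of_card n k" "r < j" "c < k"
  shows "submatrix A I K $$ (r, c) = A $$ (pick I r, pick K c)"
proof -
  have "card (I \<inter> {..<m}) = j" "card (K \<inter> {..<n}) = k" using assms(2,3) by (simp_all add: Int_absorb2)
  then show ?thesis by (intro submatrix_index_Int) (use assms(1,4,5) in simp_all)
qed

section \<open>The Cauchy--Binet formula\<close>

lemma det_mult_sum_functions:
  fixes X Y :: "'a::comm_ring_1 mat"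
  assumes X: "X \<in> carrier_mat j n" and Y: "Y \<in> carrier_mat n j"
  shows "det (X * Y) = (\<Sum>f \<in> {0..<j} \<rightarrow>\<^sub>E {0..<n}.
           (\<Prod>r=0..<j. X $$ (r, f r)) * det (mat j j (\<lambda>(r,c). Y $$ (f r, c))))"
proof -
  let ?P = "{p. p permutes {0..<j}}"
  let ?F = "{0..<j} \<rightarrow>\<^sub>E {0..<n}"
  have XY: "X * Y \<in> carrier_mat j j" using X Y by auto
  have "det (X * Y) = (\<Sum>\<sigma>\<in>?P. signof \<sigma> * (\<Prod>r=0..<j. \<Sum>k=0..<n. X $$ (r,k) * Y $$ (k, \<sigma> r)))"
    unfolding det_def'[OF XY]
  proof (rule sum.cong[OF refl])
    fix \<sigma> assume "\<sigma> \<in> ?P"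
    then have "\<And>r. r < j \<Longrightarrow> \<sigma> r < j" using permutes_in_image by fastforce
    then show "signof \<sigma> * (\<Prod>i=0..<j. (X * Y) $$ (i, \<sigma> i))
             = signof \<sigma> * (\<Prod>r=0..<j. \<Sum>k=0..<n. X $$ (r,k) * Y $$ (k, \<sigma> r))"
      using X Y by (auto simp: scalar_prod_def intro!: prod.cong)
  qed
  also have "\<dots> = (\<Sum>\<sigma>\<in>?P. signof \<sigma> * (\<Sum>f\<in>?F. \<Prod>r=0..<j. X $$ (r, f r) * Y $$ (f r, \<sigma> r)))"
    by (subst prod_sum_PiE) auto
  also have "\<dots> = (\<Sum>f\<in>?F. \<Sum>\<sigma>\<in>?P. (\<Prod>r=0..<j. X $$ (r, f r)) * (signof \<sigma> * (\<Prod>r=0..<j. Y $$ (f r, \<sigma> r))))"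
    by (subst sum.swap) (simp add: sum_distrib_left prod.distrib ac_simps)
  also have "\<dots> = (\<Sum>f\<in>?F. (\<Prod>r=0..<j. X $$ (r, f r)) * det (mat j j (\<lambda>(r,c). Y $$ (f r, c))))"
  proof (rule sum.cong[OF refl])
    fix f
    have "signof \<sigma> * (\<Prod>r=0..<j. Y $$ (f r, \<sigma> r))
        = signof \<sigma> * (\<Prod>i=0..<j. mat j j (\<lambda>(r,c). Y $$ (f r, c)) $$ (i, \<sigma> i))" if "\<sigma> \<in> ?P" for \<sigma>
    proof -
      have "\<And>r. r < j \<Longrightarrow> \<sigma> r < j" using that permutes_in_image by fastforce
      then show ?thesis by (auto intro!: prod.cong)
    qed
    then show "(\<Sum>\<sigma>\<in>?P. (\<Prod>r=0..<j. X $$ (r, f r)) * (signof \<sigma> * (\<Prod>r=0..<j. Y $$ (f r, \<sigma> r))))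
        = (\<Prod>r=0..<j. X $$ (r, f r)) * det (mat j j (\<lambda>(r,c). Y $$ (f r, c)))"
      unfolding det_def'[OF mat_carrier] sum_distrib_left by (intro sum.cong) auto
  qed
  finally show ?thesis .
qed

text \<open>An injective \<open>f : {0..<j} \<rightarrow> {0..<n}\<close> is its image \<open>L\<close> listed in increasing order,
  composed with a permutation of \<open>{0..<j}\<close>.\<close>

lemma sum_injective_functions_eq_sum_subsets_permutations:
  "(\<Sum>f \<in> {f \<in> {0..<j} \<rightarrow>\<^sub>E {0..<n}. inj_on f {0..<j}}. h f)
   = (\<Sum>L \<in> subsets_of_card n j. \<Sum>\<tau> \<in> {p. p permutes {0..<j}}. h (restrict (\<lambda>r. pick L (\<tau> r)) {0..<j}))"
proof -
  let ?P = "{p. p permutes {0..<j}}"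
  let ?S = "subsets_of_card n j"
  have "(\<Sum>f \<in> {f \<in> {0..<j} \<rightarrow>\<^sub>E {0..<n}. inj_on f {0..<j}}. h f)
      = (\<Sum>(L,\<tau>) \<in> Sigma ?S (\<lambda>_. ?P). h (restrict (\<lambda>r. pick L (\<tau> r)) {0..<j}))"
  proof (rule sum.reindex_bij_witness[symmetric, where j = "\<lambda>(L,\<tau>). restrict (\<lambda>r. pick L (\<tau> r)) {0..<j}"
      and i = "\<lambda>f. (f ` {0..<j}, \<lambda>r. if r < j then card {a \<in> f ` {0..<j}. a < f r} else r)"])
    fix a assume "a \<in> Sigma ?S (\<lambda>_. ?P)"
    then obtain L \<tau> where a: "a = (L,\<tau>)" and L: "L \<subseteq> {..<n}" "card L = j" and tau: "\<tau> permutes {0..<j}"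
      by auto
    have finL: "finite L" using L finite_subset by blast
    have tj: "\<And>r. r < j \<Longrightarrow> \<tau> r < j" using permutes_in_image[OF tau] by auto
    have "bij_betw (pick L) {0..<j} L" using bij_betw_pick[OF finL] L by (simp add: atLeast0LessThan)
    from bij_betw_trans[OF permutes_imp_bij[OF tau] this]
    have bij: "bij_betw (\<lambda>r. pick L (\<tau> r)) {0..<j} L" by (simp add: o_def)
    show "(\<lambda>f. (f ` {0..<j}, \<lambda>r. if r < j then card {a \<in> f ` {0..<j}. a < f r} else r))
       ((\<lambda>(L,\<tau>). restrict (\<lambda>r. pick L (\<tau> r)) {0..<j}) a) = a"
    proof -
      have im: "restrict (\<lambda>r. pick L (\<tau> r)) {0..<j} ` {0..<j} = L"
        using bij_betw_imp_surj_on[OF bij] by auto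
      have "r < j \<Longrightarrow> card {a \<in> L. a < pick L (\<tau> r)} = \<tau> r" for r
        using tj card_pick[of "\<tau> r" L] L by auto
      moreover have "\<not> r < j \<Longrightarrow> r = \<tau> r" for r using permutes_not_in[OF tau] by auto
      ultimately show ?thesis unfolding a split im by (auto simp: fun_eq_iff)
    qed
    have "inj_on (\<lambda>r. pick L (\<tau> r)) {0..<j}" using bij by (rule bij_betw_imp_inj_on)
    moreover have "pick L (\<tau> r) < n" if "r < j" for r using bij_betw_apply[OF bij] that L by auto
    ultimately show "(\<lambda>(L,\<tau>). restrict (\<lambda>r. pick L (\<tau> r)) {0..<j}) a \<in> {f \<in> {0..<j} \<rightarrow>\<^sub>E {0..<n}. inj_on f {0..<j}}"
      unfolding a by (auto simp: inj_on_def)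
    show "h ((\<lambda>(L,\<tau>). restrict (\<lambda>r. pick L (\<tau> r)) {0..<j}) a) =
      (case a of (L,\<tau>) \<Rightarrow> h (restrict (\<lambda>r. pick L (\<tau> r)) {0..<j}))"
      unfolding a by simp
  next
    fix f assume f: "f \<in> {f \<in> {0..<j} \<rightarrow>\<^sub>E {0..<n}. inj_on f {0..<j}}"
    let ?L = "f ` {0..<j}"
    have cL: "card ?L = j" using f card_image by fastforce
    show "(\<lambda>(L,\<tau>). restrict (\<lambda>r. pick L (\<tau> r)) {0..<j})
       ((\<lambda>f. (f ` {0..<j}, \<lambda>r. if r < j then card {a \<in> f ` {0..<j}. a < f r} else r)) f) = f"
    proof -
      have "r < j \<Longrightarrow> pick ?L (card {a \<in> ?L. a < f r}) = f r" for r
        using pick_card_in_set[of "f r" ?L] by auto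
      moreover have "\<not> r < j \<Longrightarrow> undefined = f r" for r
        using f by (auto simp: PiE_def extensional_def)
      ultimately show ?thesis by (auto simp: fun_eq_iff)
    qed
    let ?t = "\<lambda>r. if r < j then card {a \<in> ?L. a < f r} else r"
    have "?t permutes {0..<j}"
    proof (rule inj_on_nat_permutes)
      show "?t \<in> {0..<j} \<rightarrow> {0..<j}"
      proof
        fix r assume r: "r \<in> {0..<j}"
        have "{a \<in> ?L. a < f r} \<subset> ?L" using r by auto
        from psubset_card_mono[OF _ this] show "?t r \<in> {0..<j}" using r cL by simp
      qed
      show "inj_on ?t {0..<j}"
      proof (rule inj_onI)
        fix x y assume xy: "x \<in> {0..<j}" "y \<in> {0..<j}" "?t x = ?t y"
        then have "pick ?L (card {a \<in> ?L. a < f x}) = pick ?L (card {a \<in> ?L. a < f y})" by simp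
        moreover have "f x \<in> ?L" "f y \<in> ?L" using xy by auto
        ultimately have "f x = f y" using pick_card_in_set by metis
        then show "x = y" using f xy unfolding inj_on_def by auto
      qed
    qed auto
    then show "(\<lambda>f. (f ` {0..<j}, \<lambda>r. if r < j then card {a \<in> f ` {0..<j}. a < f r} else r)) f
        \<in> Sigma ?S (\<lambda>_. ?P)"
      using cL f by auto
  qed
  also have "\<dots> = (\<Sum>L\<in>?S. \<Sum>\<tau>\<in>?P. h (restrict (\<lambda>r. pick L (\<tau> r)) {0..<j}))"
    by (rule sum.Sigma[symmetric]) (auto intro: finite_subsets_of_card finite_permutations)
  finally show ?thesis .
qed

theorem cauchy_binet:
  fixes X Y :: "'a::comm_ring_1 mat"
  assumes X: "X \<in> carrier_mat j n" and Y: "Y \<in> carrier_mat n j"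
  shows "det (X * Y) = (\<Sum>L \<in> subsets_of_card n j. det (submatrix X UNIV L) * det (submatrix Y L UNIV))"
proof -
  let ?P = "{p. p permutes {0..<j}}"
  let ?F = "{0..<j} \<rightarrow>\<^sub>E {0..<n}"
  let ?Fi = "{f \<in> ?F. inj_on f {0..<j}}"
  let ?S = "subsets_of_card n j"
  let ?h = "\<lambda>f. (\<Prod>r=0..<j. X $$ (r, f r)) * det (mat j j (\<lambda>(r,c). Y $$ (f r, c)))"
  define rows where "rows L = mat j j (\<lambda>(r,c). Y $$ (pick L r, c))" for L
  define cols where "cols L = mat j j (\<lambda>(r,c). X $$ (r, pick L c))" for L
  have "det (X * Y) = sum ?h ?F" by (rule det_mult_sum_functions[OF X Y])
  also have "\<dots> = sum ?h ?Fi + sum ?h (?F - ?Fi)"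
    using sum.subset_diff[of ?Fi ?F ?h] by (simp add: add.commute finite_PiE)
  also have "sum ?h (?F - ?Fi) = 0"
  proof (rule sum.neutral, intro ballI)
    fix f assume "f \<in> ?F - ?Fi"
    then obtain r1 r2 where r: "r1 < j" "r2 < j" "r1 \<noteq> r2" "f r1 = f r2" unfolding inj_on_def by auto
    have "det (mat j j (\<lambda>(r,c). Y $$ (f r, c))) = 0"
      by (rule det_identical_rows[OF mat_carrier r(3) r(1) r(2)]) (use r in auto)
    then show "?h f = 0" by simp
  qed
  also have "sum ?h ?Fi = (\<Sum>L\<in>?S. \<Sum>\<tau>\<in>?P. ?h (restrict (\<lambda>r. pick L (\<tau> r)) {0..<j}))"
    by (rule sum_injective_functions_eq_sum_subsets_permutations)
  also have "\<dots> = (\<Sum>L\<in>?S. det (cols L) * det (rows L))"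
  proof (rule sum.cong[OF refl])
    fix L
    have "?h (restrict (\<lambda>r. pick L (\<tau> r)) {0..<j}) = (\<Prod>i=0..<j. cols L $$ (i, \<tau> i)) * (signof \<tau> * det (rows L))"
      if "\<tau> \<in> ?P" for \<tau>
    proof -
      have tj: "\<And>r. r < j \<Longrightarrow> \<tau> r < j" using that permutes_in_image by fastforce
      have "det (mat j j (\<lambda>(r,c). Y $$ (restrict (\<lambda>r. pick L (\<tau> r)) {0..<j} r, c)))
          = det (mat j j (\<lambda>(r,c). rows L $$ (\<tau> r, c)))"
        by (rule arg_cong[where f = det], rule eq_matI) (use tj in \<open>auto simp: rows_def\<close>)
      also have "\<dots> = signof \<tau> * det (rows L)"
        by (rule det_permute_rows[of _ j]) (use that in \<open>auto simp: rows_def\<close>)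
      finally show ?thesis using tj by (auto simp: cols_def intro!: prod.cong)
    qed
    moreover have det_cols: "det (cols L) = (\<Sum>\<tau>\<in>?P. signof \<tau> * (\<Prod>i=0..<j. cols L $$ (i, \<tau> i)))"
      by (rule det_def') (simp add: cols_def)
    ultimately show "(\<Sum>\<tau>\<in>?P. ?h (restrict (\<lambda>r. pick L (\<tau> r)) {0..<j})) = det (cols L) * det (rows L)"
      unfolding det_cols sum_distrib_right by (intro sum.cong) (simp_all add: ac_simps)
  qed
  also have "\<dots> = (\<Sum>L\<in>?S. det (submatrix X UNIV L) * det (submatrix Y L UNIV))"
  proof (rule sum.cong[OF refl])
    fix L assume L: "L \<in> ?S"
    have "card {i. i < j \<and> i \<in> UNIV} = j" "card {k. k < n \<and> k \<in> L} = j"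
      using L by (auto intro: arg_cong[where f = card])
    then have "submatrix X UNIV L = cols L" "submatrix Y L UNIV = rows L"
      using X Y unfolding submatrix_def cols_def rows_def pick_UNIV by auto
    then show "det (cols L) * det (rows L) = det (submatrix X UNIV L) * det (submatrix Y L UNIV)" by simp
  qed
  finally show ?thesis by simp
qed

lemma submatrix_mult:
  fixes A B :: "'a::comm_ring_1 mat"
  assumes A: "A \<in> carrier_mat m n" and B: "B \<in> carrier_mat n p"
  shows "submatrix (A * B) I K = submatrix A I UNIV * submatrix B UNIV K"
proof (rule eq_matI)
  note pick_less = pick_le[unfolded Collect_less_and_mem]
  fix r c assume "r < dim_row (submatrix A I UNIV * submatrix B UNIV K)"
    "c < dim_col (submatrix A I UNIV * submatrix B UNIV K)"
  then have r: "r < card (I \<inter> {..<m})" and c: "c < card (K \<inter> {..<p})"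
    using submatrix_carrier[of A I UNIV] submatrix_carrier[of B UNIV K] A B by auto
  have "submatrix (A * B) I K $$ (r, c) = (A * B) $$ (pick I r, pick K c)"
    by (rule submatrix_index_Int) (use r c A B in simp_all)
  also have "\<dots> = (\<Sum>i=0..<n. A $$ (pick I r, i) * B $$ (i, pick K c))"
    using A B pick_less[OF r] pick_less[OF c] by (simp add: scalar_prod_def)
  also have "\<dots> = (\<Sum>i=0..<n. submatrix A I UNIV $$ (r, i) * submatrix B UNIV K $$ (i, c))"
    using submatrix_index_Int[of r I A _ UNIV] submatrix_index_Int[of _ UNIV B c K] r c A B
    by (intro sum.cong) (simp_all add: pick_UNIV)
  also have "\<dots> = (submatrix A I UNIV * submatrix B UNIV K) $$ (r, c)"
    using submatrix_carrier[of A I UNIV] submatrix_carrier[of B UNIV K] A B r c by (simp add: scalar_prod_def)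
  finally show "submatrix (A * B) I K $$ (r, c) = (submatrix A I UNIV * submatrix B UNIV K) $$ (r, c)" .
qed (use submatrix_carrier[of A I UNIV] submatrix_carrier[of B UNIV K] submatrix_carrier[of "A * B" I K] A B in auto)

lemma submatrix_split_rows: "submatrix A I J = submatrix (submatrix A I UNIV) UNIV J"
proof (rule eq_matI)
  note pick_less = pick_le[unfolded Collect_less_and_mem]
  fix r c assume "r < dim_row (submatrix (submatrix A I UNIV) UNIV J)" "c < dim_col (submatrix (submatrix A I UNIV) UNIV J)"
  then have r: "r < card (I \<inter> {..<dim_row A})" and c: "c < card (J \<inter> {..<dim_col A})"
    using submatrix_carrier[of "submatrix A I UNIV" UNIV J] submatrix_carrier[of A I UNIV] by auto
  have "submatrix (submatrix A I UNIV) UNIV J $$ (r, c) = submatrix A I UNIV $$ (pick UNIV r, pick J c)"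
    by (rule submatrix_index_Int) (use r c submatrix_carrier[of A I UNIV] in simp_all)
  also have "\<dots> = A $$ (pick I r, pick UNIV (pick J c))"
    unfolding pick_UNIV[of r] by (rule submatrix_index_Int) (use r pick_less[OF c] in simp_all)
  finally show "submatrix A I J $$ (r, c) = submatrix (submatrix A I UNIV) UNIV J $$ (r, c)"
    using submatrix_index_Int[OF r c] by (simp add: pick_UNIV)
qed (use submatrix_carrier[of A I J] submatrix_carrier[of "submatrix A I UNIV" UNIV J]
       submatrix_carrier[of A I UNIV] in auto)

corollary det_submatrix_mult:
  fixes A B :: "'a::comm_ring_1 mat"
  assumes A: "A \<in> carrier_mat m n" and B: "B \<in> carrier_mat n p"
    and I: "I \<subseteq> {..<m}" "card I = j" and K: "K \<subseteq> {..<p}" "card K = j"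
  shows "det (submatrix (A * B) I K) = (\<Sum>L \<in> subsets_of_card n j. det (submatrix A I L) * det (submatrix B L K))"
proof -
  have "card (I \<inter> {..<m}) = j" and "card (K \<inter> {..<p}) = j" using I K by (simp_all add: Int_absorb2)
  then have X: "submatrix A I UNIV \<in> carrier_mat j n" and Y: "submatrix B UNIV K \<in> carrier_mat n j"
    using submatrix_carrier[of A I UNIV] submatrix_carrier[of B UNIV K] A B by simp_all
  show ?thesis
    unfolding submatrix_mult[OF A B] cauchy_binet[OF X Y] submatrix_split_rows[symmetric] submatrix_split[symmetric] ..
qed

section \<open>Compound matrices\<close>

definition compound_mat :: "'a::comm_ring_1 mat \<Rightarrow> nat \<Rightarrow> 'a mat" where
  "compound_mat A j = (let S = subsets_list (dim_row A) j in
     mat (length S) (length S) (\<lambda>(p, q). det (submatrix A (S ! p) (S ! q))))"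

lemma compound_mat_carrier:
  "A \<in> carrier_mat n n \<Longrightarrow> compound_mat A j \<in> carrier_mat (length (subsets_list n j)) (length (subsets_list n j))"
  by (simp add: compound_mat_def Let_def)

lemma compound_mat_index:
  "A \<in> carrier_mat n n \<Longrightarrow> p < length (subsets_list n j) \<Longrightarrow> q < length (subsets_list n j) \<Longrightarrow>
   compound_mat A j $$ (p, q) = det (submatrix A (subsets_list n j ! p) (subsets_list n j ! q))"
  by (simp add: compound_mat_def Let_def)

lemma compound_mat_mult:
  fixes A B :: "'a::comm_ring_1 mat"
  assumes A: "A \<in> carrier_mat n n" and B: "B \<in> carrier_mat n n"
  shows "compound_mat (A * B) j = compound_mat A j * compound_mat B j"
proof -
  let ?S = "subsets_list n j"
  have AB: "A * B \<in> carrier_mat n n" using A B by auto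
  show ?thesis
  proof (rule eq_matI)
    fix p q assume "p < dim_row (compound_mat A j * compound_mat B j)" "q < dim_col (compound_mat A j * compound_mat B j)"
    then have p: "p < length ?S" and q: "q < length ?S"
      using compound_mat_carrier[OF A, of j] compound_mat_carrier[OF B, of j] by auto
    have I: "?S ! p \<in> subsets_of_card n j" and K: "?S ! q \<in> subsets_of_card n j"
      using nth_subsets_list p q by blast+
    have "compound_mat (A * B) j $$ (p, q) = det (submatrix (A * B) (?S ! p) (?S ! q))"
      by (rule compound_mat_index[OF AB p q])
    also have "\<dots> = (\<Sum>L\<in>subsets_of_card n j. det (submatrix A (?S ! p) L) * det (submatrix B L (?S ! q)))"
      using det_submatrix_mult[OF A B] I K by blast
    also have "\<dots> = (\<Sum>t<length ?S. det (submatrix A (?S ! p) (?S ! t)) * det (submatrix B (?S ! t) (?S ! q)))"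
      by (rule sum.reindex_bij_betw[OF bij_betw_nth_subsets_list, symmetric])
    also have "\<dots> = (compound_mat A j * compound_mat B j) $$ (p, q)"
      using p q A B by (auto simp: compound_mat_def Let_def scalar_prod_def atLeast0LessThan intro!: sum.cong)
    finally show "compound_mat (A * B) j $$ (p, q) = (compound_mat A j * compound_mat B j) $$ (p, q)" .
  qed (use compound_mat_carrier[OF A, of j] compound_mat_carrier[OF B, of j] compound_mat_carrier[OF AB, of j] in auto)
qed

lemma det_zero_row:
  fixes M :: "'a::comm_ring_1 mat"
  assumes "M \<in> carrier_mat n n" "r < n" "\<And>c. c < n \<Longrightarrow> M $$ (r, c) = 0"
  shows "det M = 0"
  unfolding det_def'[OF assms(1)]
proof (rule sum.neutral, intro ballI)
  fix \<sigma> assume "\<sigma> \<in> {p. p permutes {0..<n}}"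
  then have "M $$ (r, \<sigma> r) = 0" using assms(2,3) permutes_in_image by fastforce
  then have "(\<Prod>i=0..<n. M $$ (i, \<sigma> i)) = 0" using assms(2) by (intro prod_zero) auto
  then show "signof \<sigma> * (\<Prod>i=0..<n. M $$ (i, \<sigma> i)) = 0" by simp
qed

lemma det_submatrix_one:
  assumes I: "I \<in> subsets_of_card n j" and K: "K \<in> subsets_of_card n j"
  shows "det (submatrix (1\<^sub>m n :: 'a::comm_ring_1 mat) I K) = (if I = K then 1 else 0)"
proof (cases "I = K")
  case True
  have "inj_on (pick I) {..<j}" using bij_betw_pick[of I] I finite_of_subsets_of_card[OF I]
    by (auto simp: bij_betw_def)
  then have "submatrix (1\<^sub>m n :: 'a mat) I I = 1\<^sub>m j"
    using submatrix_subsets_carrier[OF one_carrier_mat I I] I pick_less_bound[of I n]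
    by (intro eq_matI) (auto simp: submatrix_subsets_index[OF one_carrier_mat I I] inj_on_def)
  then show ?thesis using True by simp
next
  case False
  \<comment> \<open>a row of \<open>I\<close> outside \<open>K\<close> vanishes\<close>
  then have "\<not> I \<subseteq> K" using I K card_subset_eq[OF finite_of_subsets_of_card[OF K]] by auto
  then obtain i where i: "i \<in> I" "i \<notin> K" by auto
  define r where "r = card {a \<in> I. a < i}"
  have "{a \<in> I. a < i} \<subset> I" using i(1) by auto
  then have r: "r < j" "pick I r = i"
    using psubset_card_mono[OF finite_of_subsets_of_card[OF I]] pick_card_in_set[OF i(1)] I
    unfolding r_def by auto
  have "det (submatrix (1\<^sub>m n :: 'a mat) I K) = 0"
  proof (rule det_zero_row[OF submatrix_subsets_carrier[OF one_carrier_mat I K] r(1)])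
    fix c assume c: "c < j"
    have "pick K c \<in> K" "pick K c < n" using pick_in_set[of c K] pick_less_bound[of K n c] c K by auto
    moreover have "i < n" using i(1) I by auto
    ultimately show "submatrix (1\<^sub>m n :: 'a mat) I K $$ (r, c) = 0"
      using i(2) r c by (auto simp: submatrix_subsets_index[OF one_carrier_mat I K])
  qed
  then show ?thesis using False by simp
qed

lemma compound_mat_one: "compound_mat (1\<^sub>m n :: 'a::comm_ring_1 mat) j = 1\<^sub>m (length (subsets_list n j))"
proof (rule eq_matI)
  let ?S = "subsets_list n j"
  fix p q assume "p < dim_row (1\<^sub>m (length ?S) :: 'a mat)" "q < dim_col (1\<^sub>m (length ?S) :: 'a mat)"
  then have p: "p < length ?S" and q: "q < length ?S" by auto
  have "?S ! p = ?S ! q \<longleftrightarrow> p = q" using distinct_subsets_list p q by (simp add: nth_eq_iff_index_eq)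
  then have "compound_mat (1\<^sub>m n :: 'a mat) j $$ (p, q) = (if p = q then 1 else 0)"
    unfolding compound_mat_index[OF one_carrier_mat p q]
      det_submatrix_one[OF nth_subsets_list[OF p] nth_subsets_list[OF q]] by simp
  then show "compound_mat (1\<^sub>m n :: 'a mat) j $$ (p, q) = 1\<^sub>m (length ?S) $$ (p, q)" using p q by simp
qed (auto simp: compound_mat_def Let_def)

lemma similar_mat_wit_compound_mat:
  fixes A :: "'a::comm_ring_1 mat"
  assumes "similar_mat_wit A B P Q"
  shows "similar_mat_wit (compound_mat A j) (compound_mat B j) (compound_mat P j) (compound_mat Q j)"
proof -
  define n where "n = dim_row A"
  from similar_mat_witD[OF n_def assms]
  have c: "A \<in> carrier_mat n n" "B \<in> carrier_mat n n" "P \<in> carrier_mat n n" "Q \<in> carrier_mat n n"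
    and PQ: "P * Q = 1\<^sub>m n" and QP: "Q * P = 1\<^sub>m n" and A: "A = P * B * Q" by auto
  let ?N = "length (subsets_list n j)"
  have "compound_mat A j = compound_mat (P * B) j * compound_mat Q j"
    unfolding A by (rule compound_mat_mult) (use c in auto)
  also have "compound_mat (P * B) j = compound_mat P j * compound_mat B j"
    by (rule compound_mat_mult) (use c in auto)
  moreover have "compound_mat P j * compound_mat Q j = 1\<^sub>m ?N" "compound_mat Q j * compound_mat P j = 1\<^sub>m ?N"
    using compound_mat_mult[of P n Q j] compound_mat_mult[of Q n P j] c PQ QP by (simp_all add: compound_mat_one)
  ultimately show ?thesis
    using compound_mat_carrier[OF c(1), of j] compound_mat_carrier[OF c(2), of j]
      compound_mat_carrier[OF c(3), of j] compound_mat_carrier[OF c(4), of j]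
    unfolding similar_mat_wit_def Let_def by auto
qed

lemma (in comm_ring_hom) map_mat_compound_mat:
  assumes "A \<in> carrier_mat n n"
  shows "map_mat hom (compound_mat A j) = compound_mat (map_mat hom A) j"
proof -
  have "submatrix (map_mat hom A) I K = map_mat hom (submatrix A I K)" for I K
    by (rule eq_matI) (auto simp: submatrix_def pick_le)
  then show ?thesis using assms by (intro eq_matI) (auto simp: compound_mat_def Let_def)
qed

lemma det_weight_triangular:
  fixes M :: "'a::comm_ring_1 mat" and w :: "nat \<Rightarrow> 'b::linorder"
  assumes M: "M \<in> carrier_mat N N"
    and tri: "\<And>p q. p < N \<Longrightarrow> q < N \<Longrightarrow> p \<noteq> q \<Longrightarrow> M $$ (p, q) \<noteq> 0 \<Longrightarrow> w p < w q"
  shows "det M = (\<Prod>p=0..<N. M $$ (p, p))"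
proof -
  let ?P = "{p. p permutes {0..<N}}"
  let ?g = "\<lambda>\<sigma>. signof \<sigma> * (\<Prod>i=0..<N. M $$ (i, \<sigma> i))"
  have "?g \<sigma> = 0" if "\<sigma> \<in> ?P - {id}" for \<sigma>
  proof -
    have perm: "\<sigma> permutes {0..<N}" and ne: "\<sigma> \<noteq> id" using that by auto
    let ?D = "{p \<in> {0..<N}. \<sigma> p \<noteq> p}"
    have "?D \<noteq> {}"
    proof
      assume "?D = {}"
      then have "\<sigma> x = x" for x using permutes_not_in[OF perm, of x] by (cases "x < N") auto
      with ne show False by auto
    qed
    then have "Max (w ` ?D) \<in> w ` ?D" by (intro Max_in) auto
    then obtain p0 where "Max (w ` ?D) = w p0" "p0 \<in> ?D" by (rule imageE)
    then have p0: "p0 \<in> ?D" "w p0 = Max (w ` ?D)" by simp_all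
    have sp0: "\<sigma> p0 < N" using p0 permutes_in_image[OF perm] by auto
    have "\<sigma> (\<sigma> p0) \<noteq> \<sigma> p0" using p0 permutes_inj[OF perm] unfolding inj_def by auto
    with sp0 have "\<sigma> p0 \<in> ?D" by simp
    then have le: "w (\<sigma> p0) \<le> w p0" unfolding p0(2) by (intro Max_ge) auto
    have "M $$ (p0, \<sigma> p0) = 0"
    proof (rule ccontr)
      assume "M $$ (p0, \<sigma> p0) \<noteq> 0"
      from tri[OF _ sp0 _ this] p0 have "w p0 < w (\<sigma> p0)" by auto
      with le show False by simp
    qed
    then have "(\<Prod>i=0..<N. M $$ (i, \<sigma> i)) = 0" using p0 by (intro prod_zero) auto
    then show ?thesis by simp
  qed
  then have "sum ?g (?P - {id}) = 0" by (intro sum.neutral) auto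
  moreover have "det M = ?g id + sum ?g (?P - {id})"
    unfolding det_def'[OF M] by (rule sum.remove) (auto simp: permutes_id finite_permutations)
  ultimately show ?thesis by simp
qed

context
  fixes T :: "'a::comm_ring_1 mat" and n :: nat
  assumes T: "T \<in> carrier_mat n n" and ut: "upper_triangular T"
begin

lemma det_submatrix_diag_upper_triangular:
  assumes I: "I \<in> subsets_of_card n j"
  shows "det (submatrix T I I) = (\<Prod>i\<in>I. T $$ (i, i))"
proof -
  note sub = submatrix_subsets_carrier[OF T I I] and idx = submatrix_subsets_index[OF T I I]
  have finI: "finite I" using finite_of_subsets_of_card[OF I] .
  have "upper_triangular (submatrix T I I)"
    unfolding upper_triangular_def
  proof (intro allI impI)
    fix r c assume "r < dim_row (submatrix T I I)" and c: "c < r"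
    then have r: "r < j" using sub by simp
    have "pick I c < pick I r" using pick_mono[of r I c] r I c by auto
    moreover have "pick I r < n" using pick_less_bound[of I n r] I r by auto
    ultimately show "submatrix T I I $$ (r, c) = 0"
      using ut T r c idx unfolding upper_triangular_def by auto
  qed
  then have "det (submatrix T I I) = prod_list (diag_mat (submatrix T I I))"
    by (rule det_upper_triangular[OF _ sub])
  also have "\<dots> = (\<Prod>r<j. T $$ (pick I r, pick I r))"
    unfolding prod_list_diag_prod using sub idx by (simp add: atLeast0LessThan)
  also have "\<dots> = (\<Prod>i\<in>I. T $$ (i, i))"
    using prod.reindex_bij_betw[OF bij_betw_pick[OF finI], of "\<lambda>i. T $$ (i, i)"] I by simp
  finally show ?thesis .
qed

lemma pick_le_pick_if_det_submatrix_nonzero: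
  assumes I: "I \<in> subsets_of_card n j" and K: "K \<in> subsets_of_card n j"
    and nz: "det (submatrix T I K) \<noteq> 0" and r0: "r0 < j"
  shows "pick I r0 \<le> pick K r0"
proof (rule ccontr)
  assume "\<not> pick I r0 \<le> pick K r0"
  then have lt: "pick K r0 < pick I r0" by simp
  have "det (submatrix T I K) = 0" unfolding det_def'[OF submatrix_subsets_carrier[OF T I K]]
  proof (rule sum.neutral, intro ballI)
    fix \<sigma> assume "\<sigma> \<in> {p. p permutes {0..<j}}"
    then have \<sigma>: "\<sigma> permutes {0..<j}" by simp
    \<comment> \<open>some row at or below r0 is sent to a column at or left of r0 (pigeonhole)\<close>
    have "\<exists>a. r0 \<le> a \<and> a < j \<and> \<sigma> a \<le> r0"
    proof (rule ccontr)
      assume "\<not> ?thesis"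
      then have "\<sigma> ` {r0..<j} \<subseteq> {Suc r0..<j}" using permutes_in_image[OF \<sigma>] by fastforce
      with permutes_inj_on[OF \<sigma>] have "card {r0..<j} \<le> card {Suc r0..<j}" by (intro card_inj_on_le) auto
      then show False using r0 by simp
    qed
    then obtain a where a: "r0 \<le> a" "a < j" "\<sigma> a \<le> r0" by blast
    have "pick K (\<sigma> a) \<le> pick K r0" using pick_le_pick[OF a(3)] r0 K by simp
    moreover have "pick I r0 \<le> pick I a" using pick_le_pick[OF a(1)] a I by simp
    ultimately have lt2: "pick K (\<sigma> a) < pick I a" using lt by simp
    have sa: "\<sigma> a < j" using permutes_in_image[OF \<sigma>] a by simp
    have "pick I a < n" using pick_less_bound[of I n a] I a by auto
    then have "submatrix T I K $$ (a, \<sigma> a) = 0"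
      using lt2 ut T a sa submatrix_subsets_index[OF T I K] unfolding upper_triangular_def by auto
    then have "(\<Prod>i=0..<j. submatrix T I K $$ (i, \<sigma> i)) = 0" using a by (intro prod_zero) auto
    then show "signof \<sigma> * (\<Prod>i=0..<j. submatrix T I K $$ (i, \<sigma> i)) = 0" by simp
  qed
  with nz show False by simp
qed

lemma sum_less_if_det_submatrix_nonzero:
  assumes I: "I \<in> subsets_of_card n j" and K: "K \<in> subsets_of_card n j"
    and nz: "det (submatrix T I K) \<noteq> 0" and IK: "I \<noteq> K"
  shows "\<Sum>I < \<Sum>K"
proof -
  have finI: "finite I" and finK: "finite K" using I K by (auto intro: finite_of_subsets_of_card)
  have le: "\<forall>r\<in>{..<j}. pick I r \<le> pick K r" using pick_le_pick_if_det_submatrix_nonzero[OF I K nz] by auto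
  have "\<exists>r\<in>{..<j}. pick I r < pick K r"
  proof (rule ccontr)
    assume "\<not> ?thesis"
    then have "pick I ` {..<j} = pick K ` {..<j}" using le by (intro image_cong) force+
    then have "I = K" using bij_betw_imp_surj_on[OF bij_betw_pick[OF finI]]
        bij_betw_imp_surj_on[OF bij_betw_pick[OF finK]] I K by simp
    with IK show False by simp
  qed
  then have "(\<Sum>r<j. pick I r) < (\<Sum>r<j. pick K r)" using le by (intro sum_strict_mono_ex1) auto
  then show ?thesis using sum_pick[OF finI] sum_pick[OF finK] I K by simp
qed

lemma char_poly_compound_mat_upper_triangular:
  "char_poly (compound_mat T j) = (\<Prod>L \<in> subsets_of_card n j. [:- (\<Prod>i\<in>L. T $$ (i, i)), 1:])"
proof -
  let ?S = "subsets_list n j"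
  let ?N = "length ?S"
  let ?C = "compound_mat T j"
  have C: "?C \<in> carrier_mat ?N ?N" by (rule compound_mat_carrier[OF T])
  have CP: "char_poly_matrix ?C \<in> carrier_mat ?N ?N" using C by simp
  have ent: "char_poly_matrix ?C $$ (p, q) = (if p = q then [:0, 1:] else 0) + [:- ?C $$ (p, q):]"
    if "p < ?N" "q < ?N" for p q using that C unfolding char_poly_matrix_def by simp
  have "char_poly ?C = (\<Prod>p=0..<?N. char_poly_matrix ?C $$ (p, p))"
    unfolding char_poly_def
  \<comment> \<open>ordering the subsets by their sums makes the compound matrix triangular\<close>
  proof (rule det_weight_triangular[OF CP, where w = "\<lambda>t. \<Sum>(?S ! t)"])
    fix p q assume pq: "p < ?N" "q < ?N" "p \<noteq> q" and nz: "char_poly_matrix ?C $$ (p, q) \<noteq> 0"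
    then have "det (submatrix T (?S ! p) (?S ! q)) \<noteq> 0"
      using ent[OF pq(1,2)] compound_mat_index[OF T pq(1,2)] by auto
    moreover have "?S ! p \<noteq> ?S ! q" using distinct_subsets_list[of n j] pq by (simp add: nth_eq_iff_index_eq)
    ultimately show "\<Sum>(?S ! p) < \<Sum>(?S ! q)"
      using sum_less_if_det_submatrix_nonzero nth_subsets_list pq(1,2) by blast
  qed
  also have "\<dots> = (\<Prod>p<?N. [:- (\<Prod>i\<in>?S ! p. T $$ (i, i)), 1:])"
  proof (rule prod.cong)
    fix p assume "p \<in> {..<?N}"
    then have p: "p < ?N" by simp
    have "?C $$ (p, p) = (\<Prod>i\<in>?S ! p. T $$ (i, i))"
      using compound_mat_index[OF T p p] det_submatrix_diag_upper_triangular[OF nth_subsets_list[OF p]] by simp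
    then show "char_poly_matrix ?C $$ (p, p) = [:- (\<Prod>i\<in>?S ! p. T $$ (i, i)), 1:]" using ent[OF p p] by simp
  qed (simp add: atLeast0LessThan)
  also have "\<dots> = (\<Prod>L \<in> subsets_of_card n j. [:- (\<Prod>i\<in>L. T $$ (i, i)), 1:])"
    by (rule prod.reindex_bij_betw[OF bij_betw_nth_subsets_list])
  finally show ?thesis .
qed

end

lemma similar_upper_triangular_with_diag:
  fixes A :: "'a::conjugatable_ordered_field mat"
  assumes "A \<in> carrier_mat n n" and "char_poly A = (\<Prod>a\<leftarrow>es. [:- a, 1:])"
  obtains B P Q where "similar_mat_wit A B P Q" "upper_triangular B" "diag_mat B = es"
  using schur_decomposition[OF assms] by (metis prod_cases3)

theorem char_poly_compound_mat:
  fixes A :: "'a::conjugatable_ordered_field mat"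
  assumes A: "A \<in> carrier_mat n n" and cp: "char_poly A = (\<Prod>a\<leftarrow>as. [:- a, 1:])"
  shows "char_poly (compound_mat A j) = (\<Prod>L \<in> subsets_of_card n j. [:- (\<Prod>i\<in>L. as ! i), 1:])"
proof -
  obtain B P Q where sim: "similar_mat_wit A B P Q" and ut: "upper_triangular B" and dg: "diag_mat B = as"
    using similar_upper_triangular_with_diag[OF A cp] .
  have B: "B \<in> carrier_mat n n" using similar_mat_witD2[OF A sim] by auto
  have Bii: "B $$ (i, i) = as ! i" if "i < n" for i using dg B that unfolding diag_mat_def by auto
  have "similar_mat (compound_mat A j) (compound_mat B j)"
    using similar_mat_wit_compound_mat[OF sim] unfolding similar_mat_def by blast
  then have "char_poly (compound_mat A j) = char_poly (compound_mat B j)" by (rule char_poly_similar)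
  also have "\<dots> = (\<Prod>L \<in> subsets_of_card n j. [:- (\<Prod>i\<in>L. B $$ (i, i)), 1:])"
    by (rule char_poly_compound_mat_upper_triangular[OF B ut])
  also have "\<dots> = (\<Prod>L \<in> subsets_of_card n j. [:- (\<Prod>i\<in>L. as ! i), 1:])"
    using Bii by (intro prod.cong refl arg_cong[where f = "\<lambda>x. [:- x, 1:]"]) auto
  finally show ?thesis .
qed

section \<open>Perron's theorem for positive matrices\<close>

lemma index_mult_mat_vec_sum:
  "A \<in> carrier_mat n m \<Longrightarrow> v \<in> carrier_vec m \<Longrightarrow> i < n \<Longrightarrow> (A *\<^sub>v v) $ i = (\<Sum>k<m. A $$ (i, k) * v $ k)"
  by (auto simp: scalar_prod_def atLeast0LessThan intro!: sum.cong)

lemma index_mult_mat_sum: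
  "A \<in> carrier_mat n m \<Longrightarrow> B \<in> carrier_mat m p \<Longrightarrow> i < n \<Longrightarrow> j < p \<Longrightarrow>
   (A * B) $$ (i, j) = (\<Sum>k<m. A $$ (i, k) * B $$ (k, j))"
  by (auto simp: scalar_prod_def atLeast0LessThan intro!: sum.cong)

lemma pow_mat_Suc_left: "A \<in> carrier_mat n n \<Longrightarrow> A ^\<^sub>m Suc k = A * A ^\<^sub>m k"
proof (induction k)
  case (Suc k)
  then have "A ^\<^sub>m Suc (Suc k) = A * A ^\<^sub>m k * A" by simp
  also have "\<dots> = A * (A ^\<^sub>m k * A)" using Suc(2) by (simp add: assoc_mult_mat[of _ n n _ n])
  finally show ?case by simp
qed simp

lemma eigenvalue_smult_mat:
  fixes A :: "'a::comm_ring_1 mat"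
  assumes A: "A \<in> carrier_mat n n" and ev: "eigenvalue A \<mu>"
  shows "eigenvalue (c \<cdot>\<^sub>m A) (c * \<mu>)"
proof -
  obtain v where v: "v \<in> carrier_vec n" "v \<noteq> 0\<^sub>v n" "A *\<^sub>v v = \<mu> \<cdot>\<^sub>v v"
    using ev A unfolding eigenvalue_def eigenvector_def by auto
  have "(c \<cdot>\<^sub>m A) *\<^sub>v v = (c * \<mu>) \<cdot>\<^sub>v v"
  proof (rule eq_vecI)
    fix i assume "i < dim_vec ((c * \<mu>) \<cdot>\<^sub>v v)"
    then have i: "i < n" using v by simp
    have "((c \<cdot>\<^sub>m A) *\<^sub>v v) $ i = c * (A *\<^sub>v v) $ i"
      using A v(1) i by (simp add: index_mult_mat_vec_sum[of _ n n] sum_distrib_left ac_simps)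
    then show "((c \<cdot>\<^sub>m A) *\<^sub>v v) $ i = ((c * \<mu>) \<cdot>\<^sub>v v) $ i" using v i by simp
  qed (use A v in simp)
  then show ?thesis using A v unfolding eigenvalue_def eigenvector_def by auto
qed

lemma pow_mat_vec_ge_if_expanding:
  fixes M :: "real mat"
  assumes M: "M \<in> carrier_mat n n" and nonneg: "\<And>i j. i < n \<Longrightarrow> j < n \<Longrightarrow> 0 \<le> M $$ (i, j)"
    and u: "u \<in> carrier_vec n" and d: "0 \<le> d" and grow: "\<And>i. i < n \<Longrightarrow> d * u $ i \<le> (M *\<^sub>v u) $ i"
    and i: "i < n"
  shows "d ^ k * u $ i \<le> (M ^\<^sub>m k *\<^sub>v u) $ i"
  using i
proof (induction k arbitrary: i)
  case 0
  then show ?case using u M by simp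
next
  case (Suc k)
  have "d ^ Suc k * u $ i = d ^ k * (d * u $ i)" by simp
  also have "\<dots> \<le> d ^ k * (M *\<^sub>v u) $ i" using grow Suc d by (intro mult_left_mono) auto
  also have "\<dots> = (\<Sum>l<n. M $$ (i, l) * (d ^ k * u $ l))"
    unfolding index_mult_mat_vec_sum[OF M u Suc.prems] by (simp add: sum_distrib_left ac_simps)
  also have "\<dots> \<le> (\<Sum>l<n. M $$ (i, l) * (M ^\<^sub>m k *\<^sub>v u) $ l)"
    using Suc nonneg by (intro sum_mono mult_left_mono) auto
  also have "\<dots> = (M *\<^sub>v (M ^\<^sub>m k *\<^sub>v u)) $ i"
    by (rule index_mult_mat_vec_sum[OF M mult_mat_vec_carrier[OF pow_carrier_mat[OF M] u] Suc.prems, symmetric])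
  also have "\<dots> = (M ^\<^sub>m Suc k *\<^sub>v u) $ i"
    unfolding pow_mat_Suc_left[OF M] using M u by (simp add: assoc_mult_mat_vec[of _ n n _ n])
  finally show ?case .
qed

lemma double_root_jordan_pair:
  fixes A :: "'a::conjugatable_ordered_field mat"
  assumes A: "A \<in> carrier_mat n n" and cp: "char_poly A = [:- \<mu>, 1:] * ([:- \<mu>, 1:] * (\<Prod>a\<leftarrow>es. [:- a, 1:]))"
  obtains x v c Q where "x \<in> carrier_vec n" "v \<in> carrier_vec n" "Q \<in> carrier_mat n n" "1 < n"
    "\<And>i. i < n \<Longrightarrow> (A *\<^sub>v x) $ i = \<mu> * x $ i"
    "\<And>i. i < n \<Longrightarrow> (A *\<^sub>v v) $ i = c * x $ i + \<mu> * v $ i"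
    "\<And>r. r < n \<Longrightarrow> (\<Sum>i<n. Q $$ (r, i) * x $ i) = (if r = 0 then 1 else 0)"
    "\<And>r. r < n \<Longrightarrow> (\<Sum>i<n. Q $$ (r, i) * v $ i) = (if r = 1 then 1 else 0)"
proof -
  \<comment> \<open>the first two columns of a Schur basis starting with \<open>\<mu>, \<mu>\<close>\<close>
  from cp have "char_poly A = (\<Prod>a\<leftarrow>\<mu> # \<mu> # es. [:- a, 1:])" by simp
  then obtain B P Q where sim: "similar_mat_wit A B P Q" and ut: "upper_triangular B"
    and dg: "diag_mat B = \<mu> # \<mu> # es"
    by (rule similar_upper_triangular_with_diag[OF A])
  from similar_mat_witD2[OF A sim]
  have B: "B \<in> carrier_mat n n" and P: "P \<in> carrier_mat n n" and Q: "Q \<in> carrier_mat n n"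
    and QP: "Q * P = 1\<^sub>m n" and AP: "A = P * B * Q" by auto
  have "A * P = P * B * (Q * P)" unfolding AP using B P Q by (simp add: assoc_mult_mat[of _ n n _ n _ n])
  then have APB: "A * P = P * B" using QP B P by simp
  have "length (diag_mat B) = n" using B by (simp add: diag_mat_def)
  then have n: "0 < n" "1 < n" using dg by simp_all
  have B00: "B $$ (0, 0) = \<mu>" and B11: "B $$ (1, 1) = \<mu>"
    using dg B n unfolding diag_mat_def by (auto simp: list_eq_iff_nth_eq)
  define pcol where "pcol c = vec n (\<lambda>i. P $$ (i, c))" for c
  have pcol: "pcol c \<in> carrier_vec n" for c unfolding pcol_def by simp
  have Acol: "(A *\<^sub>v pcol c) $ i = (\<Sum>l<n. P $$ (i, l) * B $$ (l, c))" if "i < n" "c < n" for i c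
  proof -
    have "(A *\<^sub>v pcol c) $ i = (\<Sum>k<n. A $$ (i, k) * pcol c $ k)"
      by (rule index_mult_mat_vec_sum[OF A pcol that(1)])
    also have "\<dots> = (A * P) $$ (i, c)"
      unfolding index_mult_mat_sum[OF A P that] using that by (intro sum.cong) (auto simp: pcol_def)
    finally show ?thesis unfolding APB index_mult_mat_sum[OF P B that] .
  qed
  have Ax: "(A *\<^sub>v pcol 0) $ i = \<mu> * pcol 0 $ i" if i: "i < n" for i
  proof -
    have "(A *\<^sub>v pcol 0) $ i = (\<Sum>l\<in>{0}. P $$ (i, l) * B $$ (l, 0))"
      unfolding Acol[OF i n(1)] using ut B n by (intro sum.mono_neutral_right) (auto simp: upper_triangular_def)
    then show ?thesis using B00 i by (simp add: pcol_def)
  qed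
  have Av: "(A *\<^sub>v pcol 1) $ i = B $$ (0, 1) * pcol 0 $ i + \<mu> * pcol 1 $ i" if i: "i < n" for i
  proof -
    have "(A *\<^sub>v pcol 1) $ i = (\<Sum>l\<in>{0, 1}. P $$ (i, l) * B $$ (l, 1))"
      unfolding Acol[OF i n(2)] using ut B n by (intro sum.mono_neutral_right) (auto simp: upper_triangular_def)
    then show ?thesis using B11 i by (simp add: pcol_def)
  qed
  have QP_sum: "(\<Sum>i<n. Q $$ (r, i) * pcol c $ i) = (if r = c then 1 else 0)" if "r < n" "c < n" for r c
    using index_mult_mat_sum[OF Q P that] QP that by (simp add: pcol_def)
  show ?thesis
    by (rule that[where x = "pcol 0" and v = "pcol 1" and c = "B $$ (0, 1)" and Q = Q, OF pcol pcol Q n(2) Ax Av])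
      (use QP_sum[of _ 0] QP_sum[of _ 1] n in auto)
qed

text \<open>Powers of a matrix of spectral radius below one stay bounded, so they cannot stretch a
  positive vector by a fixed factor \<open>d > 1\<close> at every step.\<close>

lemma spectral_radius_ge_1_if_expanding:
  fixes M :: "real mat"
  assumes M: "M \<in> carrier_mat n n" and nonneg: "\<And>i j. i < n \<Longrightarrow> j < n \<Longrightarrow> 0 \<le> M $$ (i, j)"
    and u: "u \<in> carrier_vec n" and upos: "\<And>i. i < n \<Longrightarrow> 0 < u $ i"
    and grow: "\<And>i. i < n \<Longrightarrow> d * u $ i \<le> (M *\<^sub>v u) $ i" and d: "1 < d" and n: "0 < n"
  shows "1 \<le> spectral_radius (map_mat complex_of_real M)"
proof (rule ccontr)
  assume "\<not> ?thesis"
  then have sr: "spectral_radius (map_mat complex_of_real M) < 1" by simp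
  obtain b where b: "\<And>k. norm_bound (map_mat complex_of_real M ^\<^sub>m k) b"
    using spectral_radius_jnf_norm_bound_less_1_upper_triangular[OF _ sr] M by fastforce
  have "(M ^\<^sub>m k) $$ (0, l) \<le> b" if "l < n" for k l
  proof -
    have "map_mat complex_of_real (M ^\<^sub>m k) = map_mat complex_of_real M ^\<^sub>m k"
      by (rule of_real_hom.mat_hom_pow[OF M])
    then have "norm (map_mat complex_of_real (M ^\<^sub>m k) $$ (0, l)) \<le> b"
      using b[of k] that n M unfolding norm_bound_def by auto
    then show ?thesis using that n M by simp
  qed
  then have bound: "d ^ k * u $ 0 \<le> b * (\<Sum>l<n. u $ l)" for k
  proof -
    have "d ^ k * u $ 0 \<le> (M ^\<^sub>m k *\<^sub>v u) $ 0"
      using pow_mat_vec_ge_if_expanding[OF M nonneg u _ grow n] d by simp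
    also have "\<dots> = (\<Sum>l<n. (M ^\<^sub>m k) $$ (0, l) * u $ l)"
      using M u n by (intro index_mult_mat_vec_sum) auto
    also have "\<dots> \<le> (\<Sum>l<n. b * u $ l)"
      using \<open>\<And>k l. l < n \<Longrightarrow> (M ^\<^sub>m k) $$ (0, l) \<le> b\<close> upos by (intro sum_mono mult_right_mono) (auto intro: less_imp_le)
    finally show ?thesis by (simp add: sum_distrib_left)
  qed
  obtain k where "b * (\<Sum>l<n. u $ l) / u $ 0 < d ^ k" using real_arch_pow[OF d] by blast
  then have "b * (\<Sum>l<n. u $ l) < d ^ k * u $ 0" using upos[OF n] by (simp add: field_simps)
  with bound[of k] show False by simp
qed

lemma aligned_if_norm_sum_eq_sum_norm:
  fixes a :: "'i \<Rightarrow> complex"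
  assumes fin: "finite A" and eq: "cmod (\<Sum>k\<in>A. a k) = (\<Sum>k\<in>A. cmod (a k))"
    and s0: "(\<Sum>k\<in>A. a k) \<noteq> 0" and k: "k \<in> A"
  shows "a k = complex_of_real (cmod (a k) / cmod (\<Sum>k\<in>A. a k)) * (\<Sum>k\<in>A. a k)"
proof -
  define s where "s = (\<Sum>k\<in>A. a k)"
  define t where "t l = Re (a l * cnj s)" for l
  have le: "t l \<le> cmod (a l) * cmod s" for l
    unfolding t_def using complex_Re_le_cmod[of "a l * cnj s"] by (simp add: norm_mult)
  have "(\<Sum>l\<in>A. t l) = Re (s * cnj s)" unfolding t_def s_def by (simp add: sum_distrib_right)
  also have "\<dots> = cmod s * cmod s" by (simp add: complex_norm_square[symmetric] power2_eq_square)
  also have "\<dots> = (\<Sum>l\<in>A. cmod (a l) * cmod s)" using eq unfolding s_def by (simp add: sum_distrib_right)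
  finally have "(\<Sum>l\<in>A. cmod (a l) * cmod s - t l) = 0" by (simp add: sum_subtractf)
  then have "\<forall>l\<in>A. cmod (a l) * cmod s - t l = 0" using le fin by (subst sum_nonneg_eq_0_iff[symmetric]) auto
  then have "Re (a k * cnj s) = cmod (a k * cnj s)" using k unfolding t_def by (simp add: norm_mult)
  then have "Im (a k * cnj s) = 0" using cmod_power2[of "a k * cnj s"] by simp
  with \<open>Re (a k * cnj s) = cmod (a k * cnj s)\<close>
  have "a k * cnj s = complex_of_real (cmod (a k) * cmod s)" by (simp add: complex_eq_iff norm_mult)
  then have "a k * complex_of_real (cmod s ^ 2) = complex_of_real (cmod (a k) * cmod s) * s"
    using complex_norm_square[of s] by (metis mult.assoc mult.commute)
  then show ?thesis using s0 unfolding s_def[symmetric] by (simp add: field_simps power2_eq_square)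
qed

locale positive_matrix =
  fixes M :: "real mat" and n :: nat
  assumes carrier: "M \<in> carrier_mat n n" and dim_pos: "0 < n"
    and pos: "\<And>i j. i < n \<Longrightarrow> j < n \<Longrightarrow> 0 < M $$ (i, j)"
begin

abbreviation Mc :: "complex mat" where "Mc \<equiv> map_mat complex_of_real M"

abbreviation \<rho> :: real where "\<rho> \<equiv> spectral_radius Mc"

definition abs_vec :: "complex vec \<Rightarrow> real vec" where
  "abs_vec v = vec n (\<lambda>i. cmod (v $ i))"

lemma Mc_carrier: "Mc \<in> carrier_mat n n"
  using carrier by simp

lemma abs_vec_carrier [simp]: "abs_vec v \<in> carrier_vec n"
  by (simp add: abs_vec_def)

lemma abs_vec_index [simp]: "i < n \<Longrightarrow> abs_vec v $ i = cmod (v $ i)"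
  by (simp add: abs_vec_def)

lemma index_Mc_mult_vec:
  "v \<in> carrier_vec n \<Longrightarrow> i < n \<Longrightarrow> (Mc *\<^sub>v v) $ i = (\<Sum>k<n. complex_of_real (M $$ (i, k)) * v $ k)"
  by (subst index_mult_mat_vec_sum[OF Mc_carrier]) (use carrier in \<open>auto intro!: sum.cong\<close>)

lemma norm_Mc_mult_vec_le:
  assumes v: "v \<in> carrier_vec n" and i: "i < n"
  shows "cmod ((Mc *\<^sub>v v) $ i) \<le> (M *\<^sub>v abs_vec v) $ i"
proof -
  have "cmod ((Mc *\<^sub>v v) $ i) \<le> (\<Sum>k<n. cmod (complex_of_real (M $$ (i, k)) * v $ k))"
    unfolding index_Mc_mult_vec[OF v i] by (rule norm_sum)
  also have "\<dots> = (\<Sum>k<n. M $$ (i, k) * abs_vec v $ k)"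
    using pos i by (intro sum.cong) (auto simp: norm_mult abs_of_pos)
  also have "\<dots> = (M *\<^sub>v abs_vec v) $ i" by (rule index_mult_mat_vec_sum[OF carrier _ i, symmetric]) simp
  finally show ?thesis .
qed

lemma mult_vec_pos:
  assumes z: "z \<in> carrier_vec n" and nonneg: "\<And>k. k < n \<Longrightarrow> 0 \<le> z $ k"
    and k: "k < n" "z $ k \<noteq> 0" and i: "i < n"
  shows "0 < (M *\<^sub>v z) $ i"
proof -
  have "0 < (\<Sum>l<n. M $$ (i, l) * z $ l)"
  proof (rule sum_pos2[of _ k])
    show "0 < M $$ (i, k) * z $ k" using pos[OF i k(1)] nonneg[OF k(1)] k(2) by simp
    show "\<And>l. l \<in> {..<n} \<Longrightarrow> 0 \<le> M $$ (i, l) * z $ l" using pos i nonneg by (simp add: less_imp_le)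
  qed (use k in auto)
  then show ?thesis using index_mult_mat_vec_sum[OF carrier z i] by simp
qed

lemma eigenvalue_norm_le_rho: "eigenvalue Mc \<mu> \<Longrightarrow> cmod \<mu> \<le> \<rho>"
  using spectral_radius_mem_max(2)[OF Mc_carrier dim_pos] unfolding spectrum_def by auto

lemma ex_eigenvalue_norm_rho: "\<exists>\<mu>. eigenvalue Mc \<mu> \<and> cmod \<mu> = \<rho>"
  using spectral_radius_mem_max(1)[OF Mc_carrier dim_pos] unfolding spectrum_def by auto

lemma rho_nonneg: "0 \<le> \<rho>"
  using ex_eigenvalue_norm_rho norm_ge_zero by metis

lemma le_rho_if_expanding:
  assumes u: "u \<in> carrier_vec n" and upos: "\<And>i. i < n \<Longrightarrow> 0 < u $ i"
    and grow: "\<And>i. i < n \<Longrightarrow> c * u $ i \<le> (M *\<^sub>v u) $ i"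
  shows "c \<le> \<rho>"
proof (rule ccontr)
  assume "\<not> c \<le> \<rho>"
  define c' where "c' = (\<rho> + c) / 2"
  have c': "0 < c'" "\<rho> < c'" "c' < c" using \<open>\<not> c \<le> \<rho>\<close> rho_nonneg unfolding c'_def by auto
  define M' where "M' = (1 / c') \<cdot>\<^sub>m M"
  have M': "M' \<in> carrier_mat n n" using carrier unfolding M'_def by simp
  then have M'c: "map_mat complex_of_real M' \<in> carrier_mat n n" by simp
  \<comment> \<open>\<open>M'\<close> has spectral radius \<open>\<rho> / c' < 1\<close>, yet stretches \<open>u\<close> by \<open>c / c' > 1\<close>\<close>
  have "spectral_radius (map_mat complex_of_real M') < 1"
  proof -
    obtain \<mu> where \<mu>: "eigenvalue (map_mat complex_of_real M') \<mu>"
      "cmod \<mu> = spectral_radius (map_mat complex_of_real M')"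
      using spectral_radius_mem_max(1)[OF M'c dim_pos] unfolding spectrum_def by auto
    have "complex_of_real c' \<cdot>\<^sub>m map_mat complex_of_real M' = Mc"
      using c' by (auto simp: M'_def)
    then have "eigenvalue Mc (complex_of_real c' * \<mu>)"
      using eigenvalue_smult_mat[OF _ \<mu>(1), of n "complex_of_real c'"] M' by simp
    from eigenvalue_norm_le_rho[OF this] have "c' * cmod \<mu> \<le> \<rho>" using c' by (simp add: norm_mult)
    then have "cmod \<mu> < 1" using c' by (smt (verit) mult_less_cancel_left2 norm_ge_zero)
    then show ?thesis using \<mu> by simp
  qed
  moreover have "1 \<le> spectral_radius (map_mat complex_of_real M')"
  proof (rule spectral_radius_ge_1_if_expanding[OF M' _ u upos _ _ dim_pos])
    show "\<And>i j. i < n \<Longrightarrow> j < n \<Longrightarrow> 0 \<le> M' $$ (i, j)"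
      using pos c' carrier unfolding M'_def by (auto simp: less_imp_le)
    show "1 < c / c'" using c' by simp
    fix i assume i: "i < n"
    have "(M' *\<^sub>v u) $ i = (M *\<^sub>v u) $ i / c'"
      using carrier M' u i by (simp add: index_mult_mat_vec_sum M'_def sum_divide_distrib)
    then show "c / c' * u $ i \<le> (M' *\<^sub>v u) $ i" using grow[OF i] c' by (simp add: divide_right_mono)
  qed
  ultimately show False by simp
qed

text \<open>A nonnegative nonzero vector on which \<open>M\<close> acts at least like \<open>\<rho>\<close> is an eigenvector:
  otherwise applying \<open>M\<close> to the (nonzero, nonnegative) defect would exhibit a positive vector
  stretched by more than \<open>\<rho>\<close>.\<close>

lemma eigenvector_if_supereigenvector:
  assumes z: "z \<in> carrier_vec n" and nonneg: "\<And>k. k < n \<Longrightarrow> 0 \<le> z $ k"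
    and nz: "k0 < n" "z $ k0 \<noteq> 0" and ge: "\<And>i. i < n \<Longrightarrow> \<rho> * z $ i \<le> (M *\<^sub>v z) $ i"
    and i: "i < n"
  shows "(M *\<^sub>v z) $ i = \<rho> * z $ i"
proof (rule ccontr)
  assume ne: "(M *\<^sub>v z) $ i \<noteq> \<rho> * z $ i"
  define u where "u = M *\<^sub>v z"
  define w where "w = vec n (\<lambda>i. u $ i - \<rho> * z $ i)"
  have u: "u \<in> carrier_vec n" using carrier z unfolding u_def by simp
  have upos: "0 < u $ i" if "i < n" for i unfolding u_def by (rule mult_vec_pos[OF z nonneg nz that])
  have w: "w \<in> carrier_vec n" unfolding w_def by simp
  have "0 \<le> w $ k" if "k < n" for k using ge[OF that] that unfolding w_def u_def by simp
  moreover have "w $ i \<noteq> 0" using ne i unfolding w_def u_def by simp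
  ultimately have Mwpos: "0 < (M *\<^sub>v w) $ k" if "k < n" for k by (rule mult_vec_pos[OF w _ i _ that])
  have Mw: "(M *\<^sub>v w) $ k = (M *\<^sub>v u) $ k - \<rho> * u $ k" if k: "k < n" for k
  proof -
    have "(M *\<^sub>v w) $ k = (\<Sum>l<n. M $$ (k, l) * u $ l) - \<rho> * (\<Sum>l<n. M $$ (k, l) * z $ l)"
      unfolding index_mult_mat_vec_sum[OF carrier w k] sum_distrib_left sum_subtractf[symmetric]
      by (rule sum.cong) (auto simp: w_def algebra_simps)
    also have "(\<Sum>l<n. M $$ (k, l) * u $ l) = (M *\<^sub>v u) $ k"
      by (rule index_mult_mat_vec_sum[OF carrier u k, symmetric])
    also have "(\<Sum>l<n. M $$ (k, l) * z $ l) = u $ k"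
      unfolding u_def by (rule index_mult_mat_vec_sum[OF carrier z k, symmetric])
    finally show ?thesis .
  qed
  define eps where "eps = Min ((\<lambda>k. (M *\<^sub>v w) $ k / u $ k) ` {..<n})"
  have eps: "0 < eps" unfolding eps_def using dim_pos Mwpos upos by (subst Min_gr_iff) auto
  have "\<rho> + eps \<le> \<rho>"
  proof (rule le_rho_if_expanding[OF u upos])
    fix k assume k: "k < n"
    have "eps \<le> (M *\<^sub>v w) $ k / u $ k" unfolding eps_def using k by (intro Min_le) auto
    then have "eps * u $ k \<le> (M *\<^sub>v w) $ k" using upos[OF k] by (simp add: pos_le_divide_eq)
    then show "(\<rho> + eps) * u $ k \<le> (M *\<^sub>v u) $ k" using Mw[OF k] by (simp add: algebra_simps)
  qed
  with eps show False by simp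
qed

lemma abs_eigenvector_rho:
  assumes v: "v \<in> carrier_vec n" "v \<noteq> 0\<^sub>v n" "Mc *\<^sub>v v = \<mu> \<cdot>\<^sub>v v" and \<mu>: "cmod \<mu> = \<rho>"
  shows "0 < \<rho>" and "\<And>i. i < n \<Longrightarrow> (M *\<^sub>v abs_vec v) $ i = \<rho> * cmod (v $ i)"
    and "\<And>i. i < n \<Longrightarrow> 0 < cmod (v $ i)"
proof -
  obtain k0 where k0: "k0 < n" "v $ k0 \<noteq> 0"
    using v(1,2) by (metis eq_vecI index_zero_vec(1,2) carrier_vecD)
  have nonneg: "\<And>k. k < n \<Longrightarrow> 0 \<le> abs_vec v $ k" by simp
  have nz: "abs_vec v $ k0 \<noteq> 0" using k0 by simp
  have ge: "\<rho> * abs_vec v $ i \<le> (M *\<^sub>v abs_vec v) $ i" if i: "i < n" for i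
  proof -
    have "\<rho> * abs_vec v $ i = cmod ((Mc *\<^sub>v v) $ i)" using v i \<mu> by (simp add: norm_mult)
    also have "\<dots> \<le> (M *\<^sub>v abs_vec v) $ i" by (rule norm_Mc_mult_vec_le[OF v(1) i])
    finally show ?thesis .
  qed
  have eq: "(M *\<^sub>v abs_vec v) $ i = \<rho> * abs_vec v $ i" if "i < n" for i
    by (rule eigenvector_if_supereigenvector[OF _ nonneg k0(1) nz ge that]) simp
  have Mpos: "0 < (M *\<^sub>v abs_vec v) $ i" if "i < n" for i by (rule mult_vec_pos[OF _ nonneg k0(1) nz that]) simp
  show "0 < \<rho>" using Mpos[OF k0(1)] eq[OF k0(1)] rho_nonneg by (simp add: zero_less_mult_iff)
  then show "\<And>i. i < n \<Longrightarrow> 0 < cmod (v $ i)" using Mpos eq by (simp add: zero_less_mult_iff)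
  show "\<And>i. i < n \<Longrightarrow> (M *\<^sub>v abs_vec v) $ i = \<rho> * cmod (v $ i)" using eq by simp
qed

lemma perron_vector:
  obtains z where "z \<in> carrier_vec n" "\<And>i. i < n \<Longrightarrow> 0 < z $ i" "\<And>i. i < n \<Longrightarrow> (M *\<^sub>v z) $ i = \<rho> * z $ i"
proof -
  obtain \<mu> where \<mu>: "eigenvalue Mc \<mu>" "cmod \<mu> = \<rho>" using ex_eigenvalue_norm_rho by auto
  then obtain v where v: "v \<in> carrier_vec n" "v \<noteq> 0\<^sub>v n" "Mc *\<^sub>v v = \<mu> \<cdot>\<^sub>v v"
    unfolding eigenvalue_def eigenvector_def using carrier by auto
  show ?thesis by (rule that[of "abs_vec v"]) (use abs_eigenvector_rho[OF v \<mu>(2)] in simp_all)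
qed

lemma rho_pos: "0 < \<rho>"
proof -
  obtain \<mu> where \<mu>: "eigenvalue Mc \<mu>" "cmod \<mu> = \<rho>" using ex_eigenvalue_norm_rho by auto
  then obtain v where v: "v \<in> carrier_vec n" "v \<noteq> 0\<^sub>v n" "Mc *\<^sub>v v = \<mu> \<cdot>\<^sub>v v"
    unfolding eigenvalue_def eigenvector_def using carrier by auto
  show ?thesis using abs_eigenvector_rho(1)[OF v \<mu>(2)] .
qed

lemma peripheral_eigenvector_aligned:
  assumes v: "v \<in> carrier_vec n" "v \<noteq> 0\<^sub>v n" "Mc *\<^sub>v v = \<mu> \<cdot>\<^sub>v v" and \<mu>: "cmod \<mu> = \<rho>"
  obtains \<omega> where "\<And>k. k < n \<Longrightarrow> v $ k = complex_of_real (cmod (v $ k)) * \<omega>"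
proof -
  note abs = abs_eigenvector_rho[OF v \<mu>]
  define a where "a k = complex_of_real (M $$ (0, k)) * v $ k" for k
  define s where "s = (\<Sum>k<n. a k)"
  have "s = (Mc *\<^sub>v v) $ 0" unfolding s_def a_def using index_Mc_mult_vec[OF v(1) dim_pos] by simp
  then have "cmod s = \<rho> * cmod (v $ 0)" using v dim_pos \<mu> by (simp add: norm_mult)
  then have s0: "s \<noteq> 0" using abs(1) abs(3)[OF dim_pos] by auto
  \<comment> \<open>row 0 of \<open>M |v| = \<rho> |v|\<close> is the equality case of the triangle inequality for \<open>s\<close>\<close>
  have "cmod s = (\<Sum>k<n. M $$ (0, k) * abs_vec v $ k)"
    using \<open>cmod s = \<rho> * cmod (v $ 0)\<close> abs(2)[OF dim_pos] index_mult_mat_vec_sum[OF carrier _ dim_pos] by simp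
  also have "\<dots> = (\<Sum>k<n. cmod (a k))"
    unfolding a_def using pos dim_pos by (intro sum.cong) (auto simp: norm_mult abs_of_pos)
  finally have "cmod s = (\<Sum>k<n. cmod (a k))" .
  then have "v $ k = complex_of_real (cmod (v $ k)) * (s / complex_of_real (cmod s))" if k: "k < n" for k
  proof -
    have "a k = complex_of_real (cmod (a k) / cmod s) * s"
      using aligned_if_norm_sum_eq_sum_norm[of "{..<n}" a k] \<open>cmod s = (\<Sum>k<n. cmod (a k))\<close> s0 k
      unfolding s_def by simp
    also have "\<dots> = complex_of_real (M $$ (0, k)) * (complex_of_real (cmod (v $ k)) * (s / complex_of_real (cmod s)))"
      using pos[OF dim_pos k] s0 unfolding a_def by (simp add: norm_mult abs_of_pos field_simps)
    finally show ?thesis using pos[OF dim_pos k] unfolding a_def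
      by (simp only: mult_cancel_left of_real_eq_0_iff) simp
  qed
  then show ?thesis by (rule that)
qed

lemma peripheral_eigenvalue_eq_rho:
  assumes ev: "eigenvalue Mc \<mu>" and \<mu>: "cmod \<mu> = \<rho>"
  shows "\<mu> = complex_of_real \<rho>"
proof -
  obtain v where v: "v \<in> carrier_vec n" "v \<noteq> 0\<^sub>v n" "Mc *\<^sub>v v = \<mu> \<cdot>\<^sub>v v"
    using ev carrier unfolding eigenvalue_def eigenvector_def by auto
  note abs = abs_eigenvector_rho[OF v \<mu>]
  obtain \<omega> where \<omega>: "\<And>k. k < n \<Longrightarrow> v $ k = complex_of_real (cmod (v $ k)) * \<omega>"
    using peripheral_eigenvector_aligned[OF v \<mu>] by blast
  have "\<mu> * v $ 0 = (Mc *\<^sub>v v) $ 0" using v dim_pos by simp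
  also have "\<dots> = \<omega> * complex_of_real (\<Sum>k<n. M $$ (0, k) * abs_vec v $ k)"
    unfolding index_Mc_mult_vec[OF v(1) dim_pos] of_real_sum sum_distrib_left
    by (intro sum.cong refl) (subst \<omega>, auto)
  also have "(\<Sum>k<n. M $$ (0, k) * abs_vec v $ k) = \<rho> * cmod (v $ 0)"
    using abs(2)[OF dim_pos] index_mult_mat_vec_sum[OF carrier _ dim_pos] by simp
  finally have "\<mu> * v $ 0 = complex_of_real \<rho> * v $ 0" using \<omega>[OF dim_pos] by (simp add: ac_simps)
  moreover have "v $ 0 \<noteq> 0" using abs(3)[OF dim_pos] by auto
  ultimately show ?thesis by simp
qed

lemma rho_eigenvector_proportional:
  assumes z: "z \<in> carrier_vec n" "\<And>i. i < n \<Longrightarrow> 0 < z $ i" "\<And>i. i < n \<Longrightarrow> (M *\<^sub>v z) $ i = \<rho> * z $ i"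
    and w: "w \<in> carrier_vec n" "\<And>i. i < n \<Longrightarrow> (Mc *\<^sub>v w) $ i = complex_of_real \<rho> * w $ i"
    and i: "i < n"
  shows "w $ i = (w $ 0 / complex_of_real (z $ 0)) * complex_of_real (z $ i)"
proof (rule ccontr)
  assume ne: "\<not> ?thesis"
  define c where "c = w $ 0 / complex_of_real (z $ 0)"
  define y where "y = vec n (\<lambda>i. w $ i - c * complex_of_real (z $ i))"
  have y: "y \<in> carrier_vec n" unfolding y_def by simp
  have yi: "abs_vec y $ i \<noteq> 0" using ne i unfolding y_def c_def by simp
  have y0: "abs_vec y $ 0 = 0" using dim_pos z(2)[OF dim_pos] unfolding y_def c_def by simp
  have My: "(Mc *\<^sub>v y) $ k = complex_of_real \<rho> * y $ k" if k: "k < n" for k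
  proof -
    have "(Mc *\<^sub>v y) $ k = (Mc *\<^sub>v w) $ k - c * complex_of_real ((M *\<^sub>v z) $ k)"
      unfolding index_Mc_mult_vec[OF y k] index_Mc_mult_vec[OF w(1) k] index_mult_mat_vec_sum[OF carrier z(1) k]
        of_real_sum sum_distrib_left sum_subtractf[symmetric]
      by (intro sum.cong) (use k in \<open>auto simp: y_def algebra_simps\<close>)
    then show ?thesis using w(2)[OF k] z(3)[OF k] k unfolding y_def by (simp add: algebra_simps)
  qed
  \<comment> \<open>\<open>|y|\<close> would be a nonnegative eigenvector for \<open>\<rho>\<close> vanishing at 0, while \<open>M |y|\<close> is positive\<close>
  have ge: "\<rho> * abs_vec y $ k \<le> (M *\<^sub>v abs_vec y) $ k" if k: "k < n" for k
    using norm_Mc_mult_vec_le[OF y k] My[OF k] rho_nonneg k by (simp add: norm_mult)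
  have "(M *\<^sub>v abs_vec y) $ 0 = \<rho> * abs_vec y $ 0"
    by (rule eigenvector_if_supereigenvector[OF _ _ i yi ge dim_pos]) simp_all
  moreover have "0 < (M *\<^sub>v abs_vec y) $ 0" by (rule mult_vec_pos[OF _ _ i yi dim_pos]) simp_all
  ultimately show False using y0 by simp
qed

lemma positive_matrix_transpose: "positive_matrix (transpose_mat M) n"
  using carrier dim_pos pos by unfold_locales auto

lemma left_perron_vector:
  obtains y where "y \<in> carrier_vec n" "\<And>i. i < n \<Longrightarrow> 0 < y $ i"
    "\<And>k. k < n \<Longrightarrow> (\<Sum>i<n. M $$ (i, k) * y $ i) = \<rho> * y $ k"
proof -
  have "map_mat complex_of_real (transpose_mat M) = transpose_mat Mc" by auto
  then have "spectrum (map_mat complex_of_real (transpose_mat M)) = spectrum Mc"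
    using Mc_carrier by (simp add: spectrum_root_char_poly[of _ n])
  then have rho_T: "spectral_radius (map_mat complex_of_real (transpose_mat M)) = \<rho>"
    unfolding spectral_radius_def by simp
  obtain y where y: "y \<in> carrier_vec n" "\<And>i. i < n \<Longrightarrow> 0 < y $ i"
    "\<And>i. i < n \<Longrightarrow> (transpose_mat M *\<^sub>v y) $ i = \<rho> * y $ i"
    using positive_matrix.perron_vector[OF positive_matrix_transpose] unfolding rho_T by blast
  have "(\<Sum>i<n. M $$ (i, k) * y $ i) = \<rho> * y $ k" if k: "k < n" for k
    using y(3)[OF k] index_mult_mat_vec_sum[of "transpose_mat M" n n y k] carrier y(1) k by simp
  with y show ?thesis using that by blast
qed

lemma rho_jordan_chain_trivial:
  assumes x: "x \<in> carrier_vec n" "k0 < n" "x $ k0 \<noteq> 0" "\<And>i. i < n \<Longrightarrow> (Mc *\<^sub>v x) $ i = complex_of_real \<rho> * x $ i"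
    and v: "v \<in> carrier_vec n" "\<And>i. i < n \<Longrightarrow> (Mc *\<^sub>v v) $ i = c * x $ i + complex_of_real \<rho> * v $ i"
  shows "c = 0"
proof -
  obtain z where z: "z \<in> carrier_vec n" "\<And>i. i < n \<Longrightarrow> 0 < z $ i" "\<And>i. i < n \<Longrightarrow> (M *\<^sub>v z) $ i = \<rho> * z $ i"
    using perron_vector by blast
  obtain y where y: "y \<in> carrier_vec n" "\<And>i. i < n \<Longrightarrow> 0 < y $ i"
    "\<And>k. k < n \<Longrightarrow> (\<Sum>i<n. M $$ (i, k) * y $ i) = \<rho> * y $ k"
    using left_perron_vector by blast
  define cx where "cx = x $ 0 / complex_of_real (z $ 0)"
  have xz: "x $ i = cx * complex_of_real (z $ i)" if "i < n" for i
    unfolding cx_def by (rule rho_eigenvector_proportional[OF z x(1) x(4) that])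
  \<comment> \<open>pairing with the positive left eigenvector \<open>y\<close> annihilates \<open>(Mc - \<rho>) v = c x\<close>\<close>
  have "(\<Sum>i<n. complex_of_real (y $ i) * (Mc *\<^sub>v v) $ i)
      = (\<Sum>i<n. \<Sum>k<n. complex_of_real (y $ i) * (complex_of_real (M $$ (i, k)) * v $ k))"
    by (intro sum.cong) (simp_all add: index_Mc_mult_vec[OF v(1)] sum_distrib_left)
  also have "\<dots> = (\<Sum>k<n. complex_of_real (\<Sum>i<n. M $$ (i, k) * y $ i) * v $ k)"
    by (subst sum.swap) (simp add: of_real_sum sum_distrib_left sum_distrib_right ac_simps)
  also have "\<dots> = (\<Sum>k<n. complex_of_real \<rho> * complex_of_real (y $ k) * v $ k)"
    using y(3) by (intro sum.cong) auto
  finally have c: "c * (\<Sum>i<n. complex_of_real (y $ i) * x $ i) = 0"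
    using v(2) by (simp add: sum_distrib_left sum.distrib algebra_simps)
  moreover have "(\<Sum>i<n. complex_of_real (y $ i) * x $ i) = cx * complex_of_real (\<Sum>i<n. y $ i * z $ i)"
    unfolding of_real_sum sum_distrib_left using xz by (intro sum.cong) auto
  moreover have "cx \<noteq> 0" using xz[OF x(2)] x(3) by auto
  moreover have "0 < (\<Sum>i<n. y $ i * z $ i)" using y(2) z(2) dim_pos by (intro sum_pos) auto
  ultimately have "(\<Sum>i<n. complex_of_real (y $ i) * x $ i) \<noteq> 0" by (simp del: of_real_sum of_real_mult)
  with c show ?thesis by simp
qed

lemma rho_not_double_root:
  "char_poly Mc \<noteq> [:- complex_of_real \<rho>, 1:] * ([:- complex_of_real \<rho>, 1:] * (\<Prod>a\<leftarrow>es. [:- a, 1:]))"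
proof
  let ?r = "complex_of_real \<rho>"
  assume "char_poly Mc = [:- ?r, 1:] * ([:- ?r, 1:] * (\<Prod>a\<leftarrow>es. [:- a, 1:]))"
  then show False
  proof (rule double_root_jordan_pair[OF Mc_carrier])
    fix x v c Q
    assume x: "x \<in> carrier_vec n" and v: "v \<in> carrier_vec n" and "Q \<in> carrier_mat n n" and "1 < n"
      and Mx: "\<And>i. i < n \<Longrightarrow> (Mc *\<^sub>v x) $ i = ?r * x $ i"
      and Mv: "\<And>i. i < n \<Longrightarrow> (Mc *\<^sub>v v) $ i = c * x $ i + ?r * v $ i"
      and Qx: "\<And>r. r < n \<Longrightarrow> (\<Sum>i<n. Q $$ (r, i) * x $ i) = (if r = 0 then 1 else 0)"
      and Qv: "\<And>r. r < n \<Longrightarrow> (\<Sum>i<n. Q $$ (r, i) * v $ i) = (if r = 1 then 1 else 0)"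
    have "(\<Sum>i<n. Q $$ (0, i) * x $ i) \<noteq> 0" using Qx[OF dim_pos] by simp
    then obtain k0 where k0: "k0 < n" "x $ k0 \<noteq> 0"
      by (rule sum.not_neutral_contains_not_neutral) auto
    have "c = 0" by (rule rho_jordan_chain_trivial[OF x k0 Mx v Mv])
    \<comment> \<open>so \<open>x\<close> and \<open>v\<close> are both multiples of the Perron vector, contradicting their independence\<close>
    obtain z where z: "z \<in> carrier_vec n" "\<And>i. i < n \<Longrightarrow> 0 < z $ i"
      "\<And>i. i < n \<Longrightarrow> (M *\<^sub>v z) $ i = \<rho> * z $ i"
      using perron_vector by blast
    define a where "a = x $ 0 / complex_of_real (z $ 0)"
    define b where "b = v $ 0 / complex_of_real (z $ 0)"
    define S where "S r = (\<Sum>i<n. Q $$ (r, i) * complex_of_real (z $ i))" for r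
    have "x $ i = a * complex_of_real (z $ i)" if "i < n" for i
      unfolding a_def by (rule rho_eigenvector_proportional[OF z x Mx that])
    then have "a * S r = (\<Sum>i<n. Q $$ (r, i) * x $ i)" for r
      unfolding S_def sum_distrib_left by (intro sum.cong) (simp_all add: ac_simps)
    then have "a * S 0 = 1" using Qx[OF dim_pos] by simp
    have Mv0: "(Mc *\<^sub>v v) $ i = ?r * v $ i" if "i < n" for i using Mv[OF that] \<open>c = 0\<close> by simp
    have "v $ i = b * complex_of_real (z $ i)" if "i < n" for i
      unfolding b_def by (rule rho_eigenvector_proportional[OF z v Mv0 that])
    then have bS: "b * S r = (\<Sum>i<n. Q $$ (r, i) * v $ i)" for r
      unfolding S_def sum_distrib_left by (intro sum.cong) (simp_all add: ac_simps)
    have "b * S 0 = 0" using bS[of 0] Qv[OF dim_pos] by simp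
    with \<open>a * S 0 = 1\<close> have "b = 0" by auto
    moreover have "b * S 1 = 1" using bS[of 1] Qv[OF \<open>1 < n\<close>] by simp
    ultimately show False by simp
  qed
qed

lemma perron_root_strictly_dominant:
  assumes cp: "char_poly Mc = (\<Prod>t\<in>X. [:- f t, 1:])" and X: "finite X"
  obtains t0 where "t0 \<in> X" "f t0 = complex_of_real \<rho>" "\<And>t. t \<in> X \<Longrightarrow> t \<noteq> t0 \<Longrightarrow> cmod (f t) < \<rho>"
proof -
  have root: "eigenvalue Mc \<mu> \<longleftrightarrow> (\<exists>t\<in>X. f t = \<mu>)" for \<mu>
    unfolding eigenvalue_root_char_poly[OF Mc_carrier] cp poly_prod using X by (auto simp: prod_zero_iff)
  obtain z where z: "z \<in> carrier_vec n" "\<And>i. i < n \<Longrightarrow> 0 < z $ i" "\<And>i. i < n \<Longrightarrow> (M *\<^sub>v z) $ i = \<rho> * z $ i"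
    using perron_vector by blast
  have "eigenvector Mc (map_vec complex_of_real z) (complex_of_real \<rho>)"
    unfolding eigenvector_def
  proof (intro conjI)
    show "map_vec complex_of_real z \<noteq> 0\<^sub>v (dim_row Mc)"
      using z(1) z(2)[OF dim_pos] dim_pos carrier by (auto simp: vec_eq_iff)
    show "Mc *\<^sub>v map_vec complex_of_real z = complex_of_real \<rho> \<cdot>\<^sub>v map_vec complex_of_real z"
      using of_real_hom.mult_mat_vec_hom[OF carrier z(1), symmetric] z carrier by (auto simp: vec_eq_iff)
  qed (use z carrier in simp)
  then obtain t0 where t0: "t0 \<in> X" "f t0 = complex_of_real \<rho>" using root unfolding eigenvalue_def by blast
  have "cmod (f t) < \<rho>" if t: "t \<in> X" "t \<noteq> t0" for t
  proof -
    have ev: "eigenvalue Mc (f t)" using root t by auto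
    have "f t \<noteq> complex_of_real \<rho>"
    proof
      assume "f t = complex_of_real \<rho>"
      obtain es where es: "set es = X - {t0, t}" "distinct es" using finite_distinct_list X by (meson finite_Diff)
      have "(\<Prod>t\<in>X. [:- f t, 1:]) = [:- f t0, 1:] * (\<Prod>t\<in>X - {t0}. [:- f t, 1:])"
        by (rule prod.remove[OF X t0(1)])
      also have "(\<Prod>t\<in>X - {t0}. [:- f t, 1:]) = [:- f t, 1:] * (\<Prod>t\<in>X - {t0} - {t}. [:- f t, 1:])"
        by (rule prod.remove) (use X t in auto)
      also have "X - {t0} - {t} = X - {t0, t}" by auto
      also have "(\<Prod>t\<in>X - {t0, t}. [:- f t, 1:]) = (\<Prod>a\<leftarrow>map f es. [:- a, 1:])"
        unfolding es(1)[symmetric] prod.distinct_set_conv_list[OF es(2)] by (simp add: o_def)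
      finally have "char_poly Mc = [:- complex_of_real \<rho>, 1:] * ([:- complex_of_real \<rho>, 1:] * (\<Prod>a\<leftarrow>map f es. [:- a, 1:]))"
        unfolding cp t0(2) \<open>f t = complex_of_real \<rho>\<close> .
      then show False using rho_not_double_root by contradiction
    qed
    then have "cmod (f t) \<noteq> \<rho>" using peripheral_eigenvalue_eq_rho[OF ev] by auto
    with eigenvalue_norm_le_rho[OF ev] show ?thesis by simp
  qed
  with t0 show ?thesis using that by blast
qed

end

section \<open>Strictly sign-symmetric matrices\<close>

lemma strictly_sign_symmetric_on_reindex:
  assumes "strictly_sign_symmetric_on T a" and "g ` S \<subseteq> T"
    and "\<And>x y. x \<in> S \<Longrightarrow> y \<in> S \<Longrightarrow> b x y = a (g x) (g y)"
  shows "strictly_sign_symmetric_on S b"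
proof -
  obtain J where J: "\<forall>i\<in>T. \<forall>k\<in>T. ((i \<in> J) = (k \<in> J) \<longrightarrow> 0 < a i k) \<and> ((i \<in> J) \<noteq> (k \<in> J) \<longrightarrow> a i k < 0)"
    using assms(1) unfolding strictly_sign_symmetric_on_def by blast
  show ?thesis unfolding strictly_sign_symmetric_on_def
    by (rule exI[of _ "{x \<in> S. g x \<in> J}"]) (use J assms(2,3) in auto)
qed

lemma char_poly_signature_conj:
  fixes C :: "'a::comm_ring_1 mat"
  assumes C: "C \<in> carrier_mat n n" and s: "\<And>p. s p * s p = 1"
  shows "char_poly (mat n n (\<lambda>(p, q). s p * s q * C $$ (p, q))) = char_poly C"
proof -
  let ?D = "mat_diag n s"
  have "?D * C * ?D = mat n n (\<lambda>(p, q). s p * C $$ (p, q) * s q)"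
    unfolding mat_diag_mult_left[OF C] by (subst mat_diag_mult_right) auto
  then have "mat n n (\<lambda>(p, q). s p * s q * C $$ (p, q)) = ?D * C * ?D"
    by (auto simp: ac_simps)
  moreover have "?D * ?D = 1\<^sub>m n" using s by simp
  ultimately have "similar_mat_wit (mat n n (\<lambda>(p, q). s p * s q * C $$ (p, q))) C ?D ?D"
    using C unfolding similar_mat_wit_def Let_def by (auto simp: mat_diag_def)
  then show ?thesis by (intro char_poly_similar) (auto simp: similar_mat_def)
qed

text \<open>Conjugating by the signature matrix of \<open>J\<close> turns a strictly sign-symmetric matrix into a
  positive one with the same characteristic polynomial.\<close>

theorem strictly_sign_symmetric_perron_root:
  fixes C :: "real mat" and f :: "'i \<Rightarrow> complex"
  assumes C: "C \<in> carrier_mat N N" and N: "0 < N"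
    and sgn: "strictly_sign_symmetric_on {..<N} (\<lambda>p q. C $$ (p, q))"
    and cp: "char_poly (map_mat complex_of_real C) = (\<Prod>t\<in>X. [:- f t, 1:])" and X: "finite X"
  shows "\<exists>r t0. 0 < r \<and> t0 \<in> X \<and> f t0 = complex_of_real r \<and> (\<forall>t\<in>X. t \<noteq> t0 \<longrightarrow> cmod (f t) < r)"
proof -
  obtain J where J: "\<And>p q. p < N \<Longrightarrow> q < N \<Longrightarrow>
      ((p \<in> J) = (q \<in> J) \<longrightarrow> 0 < C $$ (p, q)) \<and> ((p \<in> J) \<noteq> (q \<in> J) \<longrightarrow> C $$ (p, q) < 0)"
    using sgn unfolding strictly_sign_symmetric_on_def by auto
  define s where "s p = (if p \<in> J then 1 else -1 :: real)" for p
  define C' where "C' = mat N N (\<lambda>(p, q). s p * s q * C $$ (p, q))"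
  have "char_poly (map_mat complex_of_real C') = map_poly complex_of_real (char_poly C')"
    by (rule of_real_hom.char_poly_hom[of _ N]) (simp add: C'_def)
  also have "char_poly C' = char_poly C"
    unfolding C'_def by (rule char_poly_signature_conj[OF C]) (simp add: s_def)
  also have "map_poly complex_of_real (char_poly C) = char_poly (map_mat complex_of_real C)"
    by (rule of_real_hom.char_poly_hom[OF C, symmetric])
  finally have "char_poly (map_mat complex_of_real C') = (\<Prod>t\<in>X. [:- f t, 1:])" unfolding cp .
  moreover have "positive_matrix C' N"
    using C N J by unfold_locales (auto simp: C'_def s_def mult_neg_neg)
  ultimately obtain t0 where "t0 \<in> X" "f t0 = complex_of_real (spectral_radius (map_mat complex_of_real C'))"
    "\<And>t. t \<in> X \<Longrightarrow> t \<noteq> t0 \<Longrightarrow> cmod (f t) < spectral_radius (map_mat complex_of_real C')"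
    using positive_matrix.perron_root_strictly_dominant[of C' N f X] X by blast
  then show ?thesis using positive_matrix.rho_pos[OF \<open>positive_matrix C' N\<close>] by blast
qed

lemma det_submatrix_singleton:
  assumes A: "A \<in> carrier_mat n n" and "i < n" "k < n"
  shows "det (submatrix A {i} {k}) = A $$ (i, k)"
proof -
  have I: "{i} \<in> subsets_of_card n 1" and K: "{k} \<in> subsets_of_card n 1" using assms by auto
  have pick: "pick {a} 0 = a" for a :: nat using pick_in_set[of 0 "{a}"] by simp
  have "det (submatrix A {i} {k}) = submatrix A {i} {k} $$ (0, 0)"
    by (rule det_single[OF submatrix_subsets_carrier[OF A I K]])
  also have "\<dots> = A $$ (pick {i} 0, pick {k} 0)"
    by (rule submatrix_subsets_index[OF A I K]) simp_all
  finally show ?thesis unfolding pick .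
qed

lemma compound_mat_strictly_sign_symmetric:
  assumes st: "STJS n A" and j: "1 \<le> j" "j \<le> n"
  shows "strictly_sign_symmetric_on {..<length (subsets_list n j)} (\<lambda>p q. compound_mat A j $$ (p, q))"
proof -
  have A: "A \<in> carrier_mat n n" using st unfolding STJS_def by simp
  have "strictly_sign_symmetric_on (subsets_of_card n j) (compound_entry A)"
  proof (cases "j = 1")
    case True
    have singleton: "\<exists>i<n. I = {i}" if "I \<in> subsets_of_card n 1" for I
    proof -
      from that have "card I = 1" by simp
      then obtain i where "I = {i}" by (rule card_1_singletonE)
      with that show ?thesis by auto
    qed
    have "the_elem I < n" if "I \<in> subsets_of_card n 1" for I
      using singleton[OF that] by auto
    then have "the_elem ` subsets_of_card n 1 \<subseteq> {..<n}" by blast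
    moreover have "compound_entry A I K = A $$ (the_elem I, the_elem K)"
      if "I \<in> subsets_of_card n 1" "K \<in> subsets_of_card n 1" for I K
      using singleton[OF that(1)] singleton[OF that(2)] det_submatrix_singleton[OF A]
      unfolding compound_entry_def by auto
    moreover have "strictly_sign_symmetric_on {..<n} (\<lambda>i k. A $$ (i, k))"
      using st unfolding STJS_def by simp
    ultimately show ?thesis unfolding True by (intro strictly_sign_symmetric_on_reindex[where g = the_elem])
  next
    case False
    then show ?thesis using st j unfolding STJS_def by simp
  qed
  moreover have "(!) (subsets_list n j) ` {..<length (subsets_list n j)} \<subseteq> subsets_of_card n j"
    by (rule image_subsetI, rule nth_subsets_list) simp
  ultimately show ?thesis
    by (rule strictly_sign_symmetric_on_reindex) (simp add: compound_mat_index[OF A] compound_entry_def)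
qed

section \<open>Eigenvalues of STJS matrices\<close>

lemma char_poly_factorized_sorted:
  fixes A :: "complex mat"
  assumes A: "A \<in> carrier_mat n n"
  obtains as where "char_poly A = (\<Prod>a\<leftarrow>as. [:- a, 1:])" "length as = n" "sorted (map (\<lambda>a. - cmod a) as)"
proof -
  obtain as where as: "char_poly A = (\<Prod>a\<leftarrow>as. [:- a, 1:])" "length as = n"
    using char_poly_factorized[OF A] by blast
  define bs where "bs = sort_key (\<lambda>a. - cmod a) as"
  have "(\<Prod>a\<leftarrow>as. [:- a, 1:]) = (\<Prod>a\<leftarrow>bs. [:- a, 1:])"
    unfolding prod_mset_prod_list[symmetric] mset_map bs_def mset_sort ..
  moreover have "length bs = n" "sorted (map (\<lambda>a. - cmod a) bs)" using as(2) by (simp_all add: bs_def)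
  ultimately show ?thesis using that as(1) by simp
qed

lemma spectral_radius_eq_largest_root:
  assumes A: "A \<in> carrier_mat n n" and n: "0 < n"
    and cp: "char_poly A = (\<Prod>i<n. [:- complex_of_real (ev i), 1:])"
    and pos: "\<And>i. i < n \<Longrightarrow> 0 < ev i" and decr: "\<And>i. Suc i < n \<Longrightarrow> ev (Suc i) < ev i"
  shows "spectral_radius A = ev 0"
proof -
  have ev0: "ev i \<le> ev 0" if "i < n" for i
    using that by (induction i) (auto intro: order.trans less_imp_le decr)
  have "spectrum A = (\<lambda>k. complex_of_real (ev k)) ` {..<n}"
    unfolding spectrum_root_char_poly[OF A] cp poly_prod by (auto simp: prod_zero_iff)
  then have "cmod ` spectrum A = ev ` {..<n}" using pos by (force simp: image_image)
  then show ?thesis unfolding spectral_radius_def using ev0 n by (intro Max_eqI) auto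
qed

lemma char_poly_of_real_factorization:
  assumes A: "A \<in> carrier_mat n n"
    and cp: "char_poly (map_mat complex_of_real A) = (\<Prod>i<k. [:- complex_of_real (ev i), 1:])"
  shows "char_poly A = (\<Prod>i<k. [:- ev i, 1:])"
proof -
  interpret of_real_poly: map_poly_inj_comm_ring_hom complex_of_real ..
  have "map_poly complex_of_real (char_poly A) = char_poly (map_mat complex_of_real A)"
    by (rule of_real_hom.char_poly_hom[OF A, symmetric])
  also have "\<dots> = map_poly complex_of_real (\<Prod>i<k. [:- ev i, 1:])"
    unfolding cp by (simp add: of_real_poly.hom_prod)
  finally show ?thesis by simp
qed

lemma prod_le_prod_initial_segment:
  fixes a :: "nat \<Rightarrow> real"
  assumes nonneg: "\<And>i. 0 \<le> a i" and antimono: "\<And>i k. i \<le> k \<Longrightarrow> k < n \<Longrightarrow> a k \<le> a i"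
    and L: "L \<in> subsets_of_card n j"
  shows "(\<Prod>i\<in>L. a i) \<le> (\<Prod>i<j. a i)"
proof -
  have "(\<Prod>i\<in>L. a i) = (\<Prod>r<j. a (pick L r))"
    using prod.reindex_bij_betw[OF bij_betw_pick[OF finite_of_subsets_of_card[OF L]], of a] L by simp
  also have "\<dots> \<le> (\<Prod>r<j. a r)"
    using L le_pick[of _ L] pick_less_bound[of L n] nonneg antimono by (intro prod_mono) auto
  finally show ?thesis .
qed

lemma dominant_subset_eq_initial_segment:
  fixes lam :: "nat \<Rightarrow> complex"
  assumes sorted: "\<And>i k. i \<le> k \<Longrightarrow> k < n \<Longrightarrow> cmod (lam k) \<le> cmod (lam i)"
    and j: "j \<le> n" and r: "0 < r" and T: "T \<in> subsets_of_card n j"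
    and prodT: "(\<Prod>i\<in>T. lam i) = complex_of_real r"
    and domT: "\<forall>L \<in> subsets_of_card n j. L \<noteq> T \<longrightarrow> cmod (\<Prod>i\<in>L. lam i) < r"
  shows "T = {..<j}"
proof (rule ccontr)
  assume "T \<noteq> {..<j}"
  moreover have "{..<j} \<in> subsets_of_card n j" using j by auto
  ultimately have "cmod (\<Prod>i<j. lam i) < r" using domT by auto
  moreover have "r = (\<Prod>i\<in>T. cmod (lam i))" using prodT r by (simp add: prod_norm)
  then have "r \<le> cmod (\<Prod>i<j. lam i)"
    using prod_le_prod_initial_segment[of "\<lambda>i. cmod (lam i)" n T j] sorted T by (simp add: prod_norm)
  ultimately show False by simp
qed

lemma positive_decreasing_if_dominant_products:
  fixes lam :: "nat \<Rightarrow> complex"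
  assumes sorted: "\<And>i k. i \<le> k \<Longrightarrow> k < n \<Longrightarrow> cmod (lam k) \<le> cmod (lam i)"
    and dom: "\<And>j. 1 \<le> j \<Longrightarrow> j \<le> n \<Longrightarrow> \<exists>r T. 0 < r \<and> T \<in> subsets_of_card n j \<and>
      (\<Prod>i\<in>T. lam i) = complex_of_real r \<and> (\<forall>L \<in> subsets_of_card n j. L \<noteq> T \<longrightarrow> cmod (\<Prod>i\<in>L. lam i) < r)"
  shows "\<And>k. k < n \<Longrightarrow> lam k = complex_of_real (Re (lam k)) \<and> 0 < Re (lam k)"
    and "\<And>k. Suc k < n \<Longrightarrow> Re (lam (Suc k)) < Re (lam k)"
proof -
  have initial: "\<exists>r>0. (\<Prod>i<j. lam i) = complex_of_real r \<and>
      (\<forall>L \<in> subsets_of_card n j. L \<noteq> {..<j} \<longrightarrow> cmod (\<Prod>i\<in>L. lam i) < r)"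
    if j: "1 \<le> j" "j \<le> n" for j
  proof -
    obtain r T where r: "0 < r" and T: "T \<in> subsets_of_card n j"
      and prodT: "(\<Prod>i\<in>T. lam i) = complex_of_real r"
      and domT: "\<forall>L \<in> subsets_of_card n j. L \<noteq> T \<longrightarrow> cmod (\<Prod>i\<in>L. lam i) < r"
      using dom[OF j] by auto
    have "T = {..<j}" by (rule dominant_subset_eq_initial_segment[OF sorted j(2) r T prodT domT])
    then show ?thesis using r prodT domT by auto
  qed
  have partial: "\<exists>r>0. (\<Prod>i<j. lam i) = complex_of_real r" if "j \<le> n" for j
  proof (cases "j = 0")
    case False
    then show ?thesis using initial[of j] that by auto
  qed (rule exI[of _ 1], simp)
  show real: "lam k = complex_of_real (Re (lam k)) \<and> 0 < Re (lam k)" if k: "k < n" for k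
  proof -
    obtain r0 r1 where r: "0 < r0" "0 < r1" "(\<Prod>i<k. lam i) = complex_of_real r0"
      "(\<Prod>i<Suc k. lam i) = complex_of_real r1"
      using partial[of k] partial[of "Suc k"] k by auto
    then have "lam k = complex_of_real (r1 / r0)" by (simp add: lessThan_Suc field_simps)
    then show ?thesis using r by simp
  qed
  have norm: "cmod (lam k) = Re (lam k)" if "k < n" for k
    using arg_cong[where f = cmod, OF conjunct1[OF real[OF that]]] conjunct2[OF real[OF that]] by simp
  have strict: "cmod (lam (Suc k)) < cmod (lam k)" if k: "Suc k < n" for k
  proof (rule ccontr)
    assume "\<not> ?thesis"
    then have eq: "cmod (lam (Suc k)) = cmod (lam k)" using sorted[of k "Suc k"] k by simp
    obtain r where r: "0 < r" "(\<Prod>i<Suc k. lam i) = complex_of_real r"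
      and domr: "\<forall>L \<in> subsets_of_card n (Suc k). L \<noteq> {..<Suc k} \<longrightarrow> cmod (\<Prod>i\<in>L. lam i) < r"
      using initial[of "Suc k"] k by auto
    \<comment> \<open>swapping \<open>k\<close> for \<open>k + 1\<close> gives a second subset of the same modulus\<close>
    define L where "L = insert (Suc k) {..<k}"
    have "L \<in> subsets_of_card n (Suc k)" "L \<noteq> {..<Suc k}" using k unfolding L_def by auto
    moreover have "cmod (\<Prod>i\<in>L. lam i) = r"
    proof -
      have "cmod (\<Prod>i\<in>L. lam i) = cmod (lam k) * cmod (\<Prod>i<k. lam i)"
        unfolding L_def using eq by (simp add: norm_mult)
      also have "\<dots> = cmod (\<Prod>i<Suc k. lam i)" by (simp add: lessThan_Suc norm_mult)
      finally show ?thesis using r by simp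
    qed
    ultimately show False using domr by auto
  qed
  show "Re (lam (Suc k)) < Re (lam k)" if "Suc k < n" for k
    using strict[OF that] norm[of k] norm[of "Suc k"] that by simp
qed

lemma compound_dominant_product:
  assumes st: "STJS n A" and cp: "char_poly (map_mat complex_of_real A) = (\<Prod>a\<leftarrow>as. [:- a, 1:])"
    and j: "1 \<le> j" "j \<le> n"
  shows "\<exists>r T. 0 < r \<and> T \<in> subsets_of_card n j \<and> (\<Prod>i\<in>T. as ! i) = complex_of_real r \<and>
    (\<forall>L \<in> subsets_of_card n j. L \<noteq> T \<longrightarrow> cmod (\<Prod>i\<in>L. as ! i) < r)"
proof -
  have A: "A \<in> carrier_mat n n" using st unfolding STJS_def by simp
  have "{..<j} \<in> set (subsets_list n j)" using j by (auto simp: set_subsets_list)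
  then have N: "0 < length (subsets_list n j)" by (cases "subsets_list n j") auto
  have "char_poly (map_mat complex_of_real (compound_mat A j))
      = (\<Prod>L \<in> subsets_of_card n j. [:- (\<Prod>i\<in>L. as ! i), 1:])"
    unfolding of_real_hom.map_mat_compound_mat[OF A] by (rule char_poly_compound_mat[OF _ cp]) (use A in simp)
  from strictly_sign_symmetric_perron_root[OF compound_mat_carrier[OF A] N
      compound_mat_strictly_sign_symmetric[OF st j] this finite_subsets_of_card]
  show ?thesis by simp
qed

theorem theorem31:
  fixes A :: "real mat" and n :: nat
  assumes "n \<ge> 1" and "STJS n A"
  shows "\<exists>ev :: nat \<Rightarrow> real.
           char_poly A = (\<Prod>i<n. [:- ev i, 1:]) \<and>
           (\<forall>i. Suc i < n \<longrightarrow> ev (Suc i) < ev i) \<and>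
           ev (n - 1) > 0 \<and>
           spectral_radius (map_mat complex_of_real A) = ev 0"
proof -
  have A: "A \<in> carrier_mat n n" using assms(2) unfolding STJS_def by simp
  obtain as where cp: "char_poly (map_mat complex_of_real A) = (\<Prod>a\<leftarrow>as. [:- a, 1:])"
    and len: "length as = n" and sorted: "sorted (map (\<lambda>a. - cmod a) as)"
    using char_poly_factorized_sorted[of "map_mat complex_of_real A" n] A by auto
  have sorted_norm: "cmod (as ! k) \<le> cmod (as ! i)" if "i \<le> k" "k < n" for i k
    using sorted_nth_mono[OF sorted that(1)] that len by simp
  note dom = compound_dominant_product[OF assms(2) cp]
  define ev where "ev k = Re (as ! k)" for k
  have pos: "as ! k = complex_of_real (ev k) \<and> 0 < ev k" if "k < n" for k
    unfolding ev_def
    by (rule positive_decreasing_if_dominant_products(1)[of n "(!) as"]) (assumption | rule sorted_norm dom that)+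
  have decr: "ev (Suc k) < ev k" if "Suc k < n" for k
    unfolding ev_def
    by (rule positive_decreasing_if_dominant_products(2)[of n "(!) as"]) (assumption | rule sorted_norm dom that)+
  have cpc: "char_poly (map_mat complex_of_real A) = (\<Prod>i<n. [:- complex_of_real (ev i), 1:])"
    unfolding cp prod.list_conv_set_nth using pos len by (auto simp: atLeast0LessThan intro!: prod.cong)
  have "spectral_radius (map_mat complex_of_real A) = ev 0"
    by (rule spectral_radius_eq_largest_root[OF _ _ cpc]) (use A assms(1) pos decr in auto)
  then show ?thesis using char_poly_of_real_factorization[OF A cpc] decr pos[of "n - 1"] assms(1) by auto
qed

end
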